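(* Let $k$ be a field, $Q$ a finite connected quiver without oriented cycles with vertex set $Q_0$ and arrow set $Q_1$. Let $Z$ be a minimal set of paths of length at least $2$, and let $B$ be the set of paths of $Q$ (including vertices) which do not contain any path of $Z$. Then $$\dim_k H^1\big(kQ/\langle Z\rangle,\,kQ/\langle Z\rangle\big)=1-|Q_0|+|(Q_1/\!/B)_{ne}|.$$
   Context: $kQ$ is the path algebra of $Q$ and $\langle Z\rangle$ the two-sided ideal generated by $Z$; $H^1(\Lambda,\Lambda)$ is the first Hochschild cohomology (derivations modulo inner derivations). $Z$ is minimal means that no path in $Z$ has a strict sub-path belonging to $Z$. The set $B$ is a basis of $kQ/\langle Z\rangle$. Define $Q_1/\!/B=\{(a,\varepsilon)\in Q_1\times B\mid s(\varepsilon)=s(a),\ t(\varepsilon)=t(a)\}$ (pairs of parallel arrow and path). A pair $(a,\varepsilon)\in Q_1/\!/B$ is glued if $a$ is the first or the last arrow of $\varepsilon$, or if $a$ is a loop and $\varepsilon$ is the vertex of that loop. A pair $(a,\varepsilon)$ is effective if (1) it is not glued, and (2) there exists a path $\gamma\in Z$ containing $a$ such that replacing $a$ by $\varepsilon$ inside $\gamma$ yields a path belonging to $B$. $(Q_1/\!/B)_{ne}$ denotes the set of elements of $Q_1/\!/B$ which are not effective. *)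

theory Defs
  imports Complex_Main "HOL-Library.Function_Algebras"
begin

text \<open>A path is a pair (v, as): a start vertex v and a list of composable arrows (first arrow
first).  Paths of length 0 are the vertices (v, []).\<close>

type_synonym ('v, 'a) path = "'v \<times> 'a list"

definition is_path :: "'v set \<Rightarrow> 'a set \<Rightarrow> ('a \<Rightarrow> 'v) \<Rightarrow> ('a \<Rightarrow> 'v) \<Rightarrow> ('v,'a) path \<Rightarrow> bool" where
  "is_path Q0 Q1 s t p \<longleftrightarrow>
     fst p \<in> Q0 \<and> set (snd p) \<subseteq> Q1 \<and>
     (snd p \<noteq> [] \<longrightarrow> s (hd (snd p)) = fst p) \<and>
     (\<forall>i. Suc i < length (snd p) \<longrightarrow> t (snd p ! i) = s (snd p ! Suc i))"

definition paths :: "'v set \<Rightarrow> 'a set \<Rightarrow> ('a \<Rightarrow> 'v) \<Rightarrow> ('a \<Rightarrow> 'v) \<Rightarrow> ('v,'a) path set" where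
  "paths Q0 Q1 s t = {p. is_path Q0 Q1 s t p}"

definition psrc :: "('v,'a) path \<Rightarrow> 'v" where
  "psrc p = fst p"

definition ptgt :: "('a \<Rightarrow> 'v) \<Rightarrow> ('v,'a) path \<Rightarrow> 'v" where
  "ptgt t p = (if snd p = [] then fst p else t (last (snd p)))"

definition plen :: "('v,'a) path \<Rightarrow> nat" where
  "plen p = length (snd p)"

text \<open>Concatenation p then q (meaningful when ptgt p = psrc q).\<close>
definition pcat :: "('v,'a) path \<Rightarrow> ('v,'a) path \<Rightarrow> ('v,'a) path" where
  "pcat p q = (fst p, snd p @ snd q)"

definition subpath :: "'v set \<Rightarrow> 'a set \<Rightarrow> ('a \<Rightarrow> 'v) \<Rightarrow> ('a \<Rightarrow> 'v) \<Rightarrow> ('v,'a) path \<Rightarrow> ('v,'a) path \<Rightarrow> bool" where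
  "subpath Q0 Q1 s t q p \<longleftrightarrow>
     (\<exists>u\<in>paths Q0 Q1 s t. \<exists>w\<in>paths Q0 Q1 s t.
        ptgt t u = psrc q \<and> ptgt t q = psrc w \<and> p = pcat (pcat u q) w)"

definition finite_quiver :: "'v set \<Rightarrow> 'a set \<Rightarrow> ('a \<Rightarrow> 'v) \<Rightarrow> ('a \<Rightarrow> 'v) \<Rightarrow> bool" where
  "finite_quiver Q0 Q1 s t \<longleftrightarrow> finite Q0 \<and> finite Q1 \<and> (\<forall>a\<in>Q1. s a \<in> Q0 \<and> t a \<in> Q0)"

definition connected_quiver :: "'v set \<Rightarrow> 'a set \<Rightarrow> ('a \<Rightarrow> 'v) \<Rightarrow> ('a \<Rightarrow> 'v) \<Rightarrow> bool" where
  "connected_quiver Q0 Q1 s t \<longleftrightarrow> Q0 \<noteq> {} \<and>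
     (\<forall>u\<in>Q0. \<forall>v\<in>Q0. (u, v) \<in> ({(s a, t a) | a. a \<in> Q1} \<union> {(t a, s a) | a. a \<in> Q1})\<^sup>*)"

definition acyclic_quiver :: "'v set \<Rightarrow> 'a set \<Rightarrow> ('a \<Rightarrow> 'v) \<Rightarrow> ('a \<Rightarrow> 'v) \<Rightarrow> bool" where
  "acyclic_quiver Q0 Q1 s t \<longleftrightarrow>
     (\<forall>p\<in>paths Q0 Q1 s t. plen p \<ge> 1 \<longrightarrow> psrc p \<noteq> ptgt t p)"

definition minimal_relations :: "'v set \<Rightarrow> 'a set \<Rightarrow> ('a \<Rightarrow> 'v) \<Rightarrow> ('a \<Rightarrow> 'v) \<Rightarrow> ('v,'a) path set \<Rightarrow> bool" where
  "minimal_relations Q0 Q1 s t Z \<longleftrightarrow>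
     Z \<subseteq> paths Q0 Q1 s t \<and> (\<forall>z\<in>Z. plen z \<ge> 2) \<and>
     (\<forall>z\<in>Z. \<forall>z'\<in>Z. subpath Q0 Q1 s t z' z \<longrightarrow> z' = z)"

definition basisB :: "'v set \<Rightarrow> 'a set \<Rightarrow> ('a \<Rightarrow> 'v) \<Rightarrow> ('a \<Rightarrow> 'v) \<Rightarrow> ('v,'a) path set \<Rightarrow> ('v,'a) path set" where
  "basisB Q0 Q1 s t Z = {p \<in> paths Q0 Q1 s t. \<forall>z\<in>Z. \<not> subpath Q0 Q1 s t z p}"

definition pathalg :: "'v set \<Rightarrow> 'a set \<Rightarrow> ('a \<Rightarrow> 'v) \<Rightarrow> ('a \<Rightarrow> 'v) \<Rightarrow> (('v,'a) path \<Rightarrow> 'k::field) set" where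
  "pathalg Q0 Q1 s t = {f. \<forall>p. p \<notin> paths Q0 Q1 s t \<longrightarrow> f p = 0}"

definition pmul :: "'v set \<Rightarrow> 'a set \<Rightarrow> ('a \<Rightarrow> 'v) \<Rightarrow> ('a \<Rightarrow> 'v) \<Rightarrow>
    (('v,'a) path \<Rightarrow> 'k::field) \<Rightarrow> (('v,'a) path \<Rightarrow> 'k) \<Rightarrow> (('v,'a) path \<Rightarrow> 'k)" where
  "pmul Q0 Q1 s t f g = (\<lambda>r. \<Sum>pq\<in>{(p,q). p \<in> paths Q0 Q1 s t \<and> q \<in> paths Q0 Q1 s t \<and>
        ptgt t p = psrc q \<and> pcat p q = r}. f (fst pq) * g (snd pq))"

definition delta :: "('v,'a) path \<Rightarrow> (('v,'a) path \<Rightarrow> 'k::field)" where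
  "delta z = (\<lambda>p. if p = z then 1 else 0)"

inductive_set gen_ideal :: "'v set \<Rightarrow> 'a set \<Rightarrow> ('a \<Rightarrow> 'v) \<Rightarrow> ('a \<Rightarrow> 'v) \<Rightarrow> ('v,'a) path set
     \<Rightarrow> (('v,'a) path \<Rightarrow> 'k::field) set"
  for Q0 Q1 s t Z where
  gen: "z \<in> Z \<Longrightarrow> delta z \<in> gen_ideal Q0 Q1 s t Z"
| zero: "(\<lambda>_. 0) \<in> gen_ideal Q0 Q1 s t Z"
| add: "x \<in> gen_ideal Q0 Q1 s t Z \<Longrightarrow> y \<in> gen_ideal Q0 Q1 s t Z \<Longrightarrow> (\<lambda>p. x p + y p) \<in> gen_ideal Q0 Q1 s t Z"
| smult: "x \<in> gen_ideal Q0 Q1 s t Z \<Longrightarrow> (\<lambda>p. c * x p) \<in> gen_ideal Q0 Q1 s t Z"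
| lmult: "x \<in> gen_ideal Q0 Q1 s t Z \<Longrightarrow> a \<in> pathalg Q0 Q1 s t \<Longrightarrow> pmul Q0 Q1 s t a x \<in> gen_ideal Q0 Q1 s t Z"
| rmult: "x \<in> gen_ideal Q0 Q1 s t Z \<Longrightarrow> a \<in> pathalg Q0 Q1 s t \<Longrightarrow> pmul Q0 Q1 s t x a \<in> gen_ideal Q0 Q1 s t Z"

text \<open>k-linear endomorphisms of kQ are represented by matrices M (M p q = coefficient of
q in the image of p), supported on paths x paths.\<close>

definition endo_mats :: "'v set \<Rightarrow> 'a set \<Rightarrow> ('a \<Rightarrow> 'v) \<Rightarrow> ('a \<Rightarrow> 'v) \<Rightarrow>
    (('v,'a) path \<Rightarrow> ('v,'a) path \<Rightarrow> 'k::field) set" where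
  "endo_mats Q0 Q1 s t = {M. \<forall>p q. p \<notin> paths Q0 Q1 s t \<or> q \<notin> paths Q0 Q1 s t \<longrightarrow> M p q = 0}"

definition mapp :: "'v set \<Rightarrow> 'a set \<Rightarrow> ('a \<Rightarrow> 'v) \<Rightarrow> ('a \<Rightarrow> 'v) \<Rightarrow>
    (('v,'a) path \<Rightarrow> ('v,'a) path \<Rightarrow> 'k::field) \<Rightarrow> (('v,'a) path \<Rightarrow> 'k) \<Rightarrow> (('v,'a) path \<Rightarrow> 'k)" where
  "mapp Q0 Q1 s t M f = (\<lambda>q. \<Sum>p\<in>paths Q0 Q1 s t. f p * M p q)"

text \<open>Lifts of derivations of A = kQ/I: linear maps D of kQ with D(I) in I and
D(xy) - x D(y) - D(x) y in I.\<close>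
definition der_lifts :: "'v set \<Rightarrow> 'a set \<Rightarrow> ('a \<Rightarrow> 'v) \<Rightarrow> ('a \<Rightarrow> 'v) \<Rightarrow> ('v,'a) path set \<Rightarrow>
    (('v,'a) path \<Rightarrow> ('v,'a) path \<Rightarrow> 'k::field) set" where
  "der_lifts Q0 Q1 s t Z =
    {M \<in> endo_mats Q0 Q1 s t.
       (\<forall>x\<in>gen_ideal Q0 Q1 s t Z. mapp Q0 Q1 s t M x \<in> gen_ideal Q0 Q1 s t Z) \<and>
       (\<forall>x\<in>pathalg Q0 Q1 s t. \<forall>y\<in>pathalg Q0 Q1 s t.
          (\<lambda>r. mapp Q0 Q1 s t M (pmul Q0 Q1 s t x y) r
               - pmul Q0 Q1 s t x (mapp Q0 Q1 s t M y) r
               - pmul Q0 Q1 s t (mapp Q0 Q1 s t M x) y r) \<in> gen_ideal Q0 Q1 s t Z)}"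

text \<open>Lifts of inner derivations: D(x) = c x - x c modulo I for some c in kQ.\<close>
definition inn_lifts :: "'v set \<Rightarrow> 'a set \<Rightarrow> ('a \<Rightarrow> 'v) \<Rightarrow> ('a \<Rightarrow> 'v) \<Rightarrow> ('v,'a) path set \<Rightarrow>
    (('v,'a) path \<Rightarrow> ('v,'a) path \<Rightarrow> 'k::field) set" where
  "inn_lifts Q0 Q1 s t Z =
    {M \<in> endo_mats Q0 Q1 s t.
       \<exists>c\<in>pathalg Q0 Q1 s t. \<forall>x\<in>pathalg Q0 Q1 s t.
          (\<lambda>r. mapp Q0 Q1 s t M x r - (pmul Q0 Q1 s t c x r - pmul Q0 Q1 s t x c r))
            \<in> gen_ideal Q0 Q1 s t Z}"

definition mat_scale :: "'k::field \<Rightarrow> ('p \<Rightarrow> 'p \<Rightarrow> 'k) \<Rightarrow> ('p \<Rightarrow> 'p \<Rightarrow> 'k)" where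
  "mat_scale c M = (\<lambda>p q. c * M p q)"

text \<open>dim_k H^1(A,A) = dim Der(A) - dim Inn(A) = dim der_lifts - dim inn_lifts
(both contain the maps with image in I, which induce 0 on A).\<close>
definition HH1_dim :: "'v set \<Rightarrow> 'a set \<Rightarrow> ('a \<Rightarrow> 'v) \<Rightarrow> ('a \<Rightarrow> 'v) \<Rightarrow> ('v,'a) path set \<Rightarrow> 'k::field itself \<Rightarrow> int" where
  "HH1_dim Q0 Q1 s t Z (_::'k itself) =
     int (vector_space.dim (mat_scale :: 'k \<Rightarrow> _) (der_lifts Q0 Q1 s t Z :: (_ \<Rightarrow> _ \<Rightarrow> 'k) set))
   - int (vector_space.dim (mat_scale :: 'k \<Rightarrow> _) (inn_lifts Q0 Q1 s t Z :: (_ \<Rightarrow> _ \<Rightarrow> 'k) set))"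

definition parallel_pairs :: "'v set \<Rightarrow> 'a set \<Rightarrow> ('a \<Rightarrow> 'v) \<Rightarrow> ('a \<Rightarrow> 'v) \<Rightarrow> ('v,'a) path set \<Rightarrow> ('a \<times> ('v,'a) path) set" where
  "parallel_pairs Q0 Q1 s t B = {(a, e). a \<in> Q1 \<and> e \<in> B \<and> psrc e = s a \<and> ptgt t e = t a}"

definition glued :: "('a \<Rightarrow> 'v) \<Rightarrow> ('a \<Rightarrow> 'v) \<Rightarrow> 'a \<Rightarrow> ('v,'a) path \<Rightarrow> bool" where
  "glued s t a e \<longleftrightarrow>
     (snd e \<noteq> [] \<and> (hd (snd e) = a \<or> last (snd e) = a)) \<or>
     (s a = t a \<and> snd e = [] \<and> fst e = s a)"

definition effective :: "'v set \<Rightarrow> 'a set \<Rightarrow> ('a \<Rightarrow> 'v) \<Rightarrow> ('a \<Rightarrow> 'v) \<Rightarrow> ('v,'a) path set \<Rightarrow> 'a \<Rightarrow> ('v,'a) path \<Rightarrow> bool" where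
  "effective Q0 Q1 s t Z a e \<longleftrightarrow>
     \<not> glued s t a e \<and>
     (\<exists>\<gamma>\<in>Z. \<exists>xs ys. snd \<gamma> = xs @ a # ys \<and>
        (fst \<gamma>, xs @ snd e @ ys) \<in> basisB Q0 Q1 s t Z)"

definition non_effective :: "'v set \<Rightarrow> 'a set \<Rightarrow> ('a \<Rightarrow> 'v) \<Rightarrow> ('a \<Rightarrow> 'v) \<Rightarrow> ('v,'a) path set \<Rightarrow> ('a \<times> ('v,'a) path) set" where
  "non_effective Q0 Q1 s t Z =
     {(a, e) \<in> parallel_pairs Q0 Q1 s t (basisB Q0 Q1 s t Z). \<not> effective Q0 Q1 s t Z a e}"

end

theory Submission
  imports Defs
begin

text \<open>
  H^1 is computed on matrices of linear maps of kQ: HH1_dim is dim Der - dim Inn for the lifts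
  of derivations and of inner derivations. Reducing modulo I (keeping the coordinates at the
  basis B) kills the same maps in both spaces, and every derivation agrees with an inner one on
  the rows of the vertices. So the difference of dimensions is that of the reduced derivations
  vanishing on vertices ("normalized") and of the inner ones among them.

  A normalized derivation D is determined by the values D(a) at parallel basis paths e. The
  coefficient of e in D(a) reappears in D(p) at the path obtained from p by replacing a with e,
  for every path p through a. When (a, e) is effective this forces the coefficient to vanish,
  since D maps I into I; when it is not, replacing a by e defines a normalized derivation.
  Hence the normalized derivations have dimension |(Q1//B)_ne|. The inner ones come from
  linear combinations of vertices, and by connectedness only the multiples of the unit give 0:
  their dimension is |Q0| - 1.
\<close>

section \<open>Linear algebra\<close>

lemma sum_fun_apply: "sum f A x = (\<Sum>a\<in>A. f a x)"
  by (induction A rule: infinite_finite_induct) auto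

context vector_space begin

lemma span_disjoint_parts_eq_0:
  assumes indep: "independent (K \<union> L)" and fin: "finite (K \<union> L)" and disj: "K \<inter> L = {}"
    and xK: "x \<in> span K" and xL: "x \<in> span L"
  shows "x = 0"
proof -
  have finK: "finite K" and finL: "finite L" using fin by auto
  obtain c where c: "x = (\<Sum>v\<in>L. c v *s v)" using xL span_finite[OF finL] by auto
  obtain w where w: "x = (\<Sum>v\<in>K. w v *s v)" using xK span_finite[OF finK] by auto
  define d where "d v = (if v \<in> L then c v else - w v)" for v
  have "(\<Sum>v\<in>K \<union> L. d v *s v) = (\<Sum>v\<in>K. d v *s v) + (\<Sum>v\<in>L. d v *s v)"
    using disj finK finL by (simp add: sum.union_disjoint)
  also have "(\<Sum>v\<in>L. d v *s v) = x" using c d_def by simp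
  also have "(\<Sum>v\<in>K. d v *s v) = (\<Sum>v\<in>K. - (w v *s v))"
    using disj by (auto simp: d_def scale_minus_left intro!: sum.cong)
  also have "\<dots> = - x" using w by (simp add: sum_negf)
  finally have "(\<Sum>v\<in>K \<union> L. d v *s v) = 0" by simp
  then have "\<forall>v\<in>K \<union> L. d v = 0"
    using dependent_finite[OF fin] indep by blast
  then have "\<forall>v\<in>L. c v = 0" by (metis UnI2 d_def)
  then show ?thesis using c by simp
qed

lemma dim_zero: "dim {0} = 0"
  using dim_span[of "{}"] dim_eq_card_independent[OF independent_empty] by simp

end

context vector_space_pair begin

text \<open>Unlike the library version, the ambient space need not be finite-dimensional:
  V only has to lie in the span of a finite set.\<close>

lemma rank_nullity:
  assumes lf: "Vector_Spaces.linear s1 s2 f" and V: "vs1.subspace V"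
    and F: "finite F" and VF: "V \<subseteq> vs1.span F"
  shows "vs1.dim V = vs1.dim (V \<inter> {x. f x = 0}) + vs2.dim (f ` V)"
proof -
  obtain K where K: "K \<subseteq> V \<inter> {x. f x = 0}" "vs1.independent K"
      "V \<inter> {x. f x = 0} \<subseteq> vs1.span K" "card K = vs1.dim (V \<inter> {x. f x = 0})"
    using vs1.basis_exists by blast
  obtain B where B: "K \<subseteq> B" "B \<subseteq> V" "vs1.independent B" "V \<subseteq> vs1.span B"
    using vs1.maximal_independent_subset_extend[of K V] K by auto
  have finB: "finite B"
    using vs1.independent_span_bound[OF F B(3)] B(2) VF by blast
  have "vs1.span B = vs1.span V"
    using B(2,4) vs1.span_mono vs1.span_span by (metis subset_antisym)
  then have dimV: "vs1.dim V = card B"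
    by (rule vs1.dim_eq_card[OF _ B(3)])
  define L where "L = B - K"
  have finL: "finite L" "finite K" using finB B(1) unfolding L_def by (auto intro: finite_subset)
  have KL: "K \<inter> L = {}" "B = K \<union> L" using L_def B(1) by auto
  have spanLV: "vs1.span L \<subseteq> V"
    by (rule vs1.span_minimal) (use B(2) L_def V in auto)
  have ker_L: "x = 0" if "x \<in> vs1.span L" "f x = 0" for x
    using vs1.span_disjoint_parts_eq_0[of K L x] B(3) finB KL K(3) spanLV that by auto
  have injL: "inj_on f (vs1.span L)"
    unfolding linear_inj_on_iff_eq_0[OF lf vs1.subspace_span] using ker_L by blast
  have indL: "vs2.independent (f ` L)"
    using linear_independent_injective_image[OF lf _ injL] vs1.independent_mono[OF B(3)]
    by (auto simp: L_def)
  have cardfL: "card (f ` L) = card L"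
    using card_image inj_on_subset[OF injL vs1.span_superset] by blast
  have "f ` B \<subseteq> insert 0 (f ` L)" using K(1) KL(2) by auto
  then have "vs2.span (f ` B) \<subseteq> vs2.span (f ` L)"
    using vs2.span_mono vs2.span_insert_0 by metis
  then have "f ` V \<subseteq> vs2.span (f ` L)"
    using linear_spans_image[OF lf B(4)] by blast
  moreover have "f ` L \<subseteq> f ` V" using L_def B(2) by auto
  ultimately have "vs2.span (f ` L) = vs2.span (f ` V)"
    using vs2.span_mono vs2.span_span by (metis subset_antisym)
  then have "vs2.dim (f ` V) = card (f ` L)"
    by (rule vs2.dim_eq_card[OF _ indL])
  moreover have "card B = card K + card L"
    unfolding KL(2) by (rule card_Un_disjoint[OF finL(2) finL(1) KL(1)])
  ultimately show ?thesis using dimV K(4) cardfL by simp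
qed

lemma dim_diff_eq_image_dim_diff:
  assumes "Vector_Spaces.linear s1 s2 f" "vs1.subspace V" "vs1.subspace W" "finite F"
    "V \<subseteq> vs1.span F" "W \<subseteq> vs1.span F" "V \<inter> {x. f x = 0} = W \<inter> {x. f x = 0}"
  shows "int (vs1.dim V) - int (vs1.dim W) = int (vs2.dim (f ` V)) - int (vs2.dim (f ` W))"
  using rank_nullity[of f V F] rank_nullity[of f W F] assms by simp

lemma dim_diff_eq_kernel_dim_diff:
  assumes "Vector_Spaces.linear s1 s2 f" "vs1.subspace V" "vs1.subspace W" "finite F"
    "V \<subseteq> vs1.span F" "W \<subseteq> vs1.span F" "f ` V = f ` W"
  shows "int (vs1.dim V) - int (vs1.dim W)
    = int (vs1.dim (V \<inter> {x. f x = 0})) - int (vs1.dim (W \<inter> {x. f x = 0}))"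
  using rank_nullity[of f V F] rank_nullity[of f W F] assms by simp

end

definition fscale :: "'k::field \<Rightarrow> ('x \<Rightarrow> 'k) \<Rightarrow> ('x \<Rightarrow> 'k)" where
  "fscale c f = (\<lambda>x. c * f x)"

lemma vector_space_fscale: "vector_space (fscale :: 'k::field \<Rightarrow> ('x \<Rightarrow> 'k) \<Rightarrow> _)"
  by unfold_locales (auto simp: fscale_def fun_eq_iff algebra_simps)

lemma vector_space_mat_scale: "vector_space (mat_scale :: 'k::field \<Rightarrow> ('p \<Rightarrow> 'p \<Rightarrow> 'k) \<Rightarrow> _)"
  by unfold_locales (auto simp: mat_scale_def fun_eq_iff algebra_simps)

interpretation fun_vs: vector_space "fscale :: 'k::field \<Rightarrow> ('x \<Rightarrow> 'k) \<Rightarrow> _"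
  by (rule vector_space_fscale)

interpretation mat_vs: vector_space "mat_scale :: 'k::field \<Rightarrow> ('p \<Rightarrow> 'p \<Rightarrow> 'k) \<Rightarrow> _"
  by (rule vector_space_mat_scale)

interpretation mat_mat: vector_space_pair
  "mat_scale :: 'k::field \<Rightarrow> ('p \<Rightarrow> 'p \<Rightarrow> 'k) \<Rightarrow> _" "mat_scale :: 'k \<Rightarrow> ('q \<Rightarrow> 'q \<Rightarrow> 'k) \<Rightarrow> _" ..

interpretation mat_fun: vector_space_pair
  "mat_scale :: 'k::field \<Rightarrow> ('p \<Rightarrow> 'p \<Rightarrow> 'k) \<Rightarrow> _" "fscale :: 'k \<Rightarrow> ('x \<Rightarrow> 'k) \<Rightarrow> _" ..

interpretation fun_mat: vector_space_pair
  "fscale :: 'k::field \<Rightarrow> ('x \<Rightarrow> 'k) \<Rightarrow> _" "mat_scale :: 'k \<Rightarrow> ('p \<Rightarrow> 'p \<Rightarrow> 'k) \<Rightarrow> _" ..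

definition unit_fun :: "'x \<Rightarrow> 'x \<Rightarrow> 'k::field" where
  "unit_fun y = (\<lambda>x. if x = y then 1 else 0)"

definition supp_funs :: "'x set \<Rightarrow> ('x \<Rightarrow> 'k::field) set" where
  "supp_funs S = {f. \<forall>x. x \<notin> S \<longrightarrow> f x = 0}"

lemma supp_funs_eq_sum:
  assumes "finite S" "f \<in> supp_funs S"
  shows "f = (\<Sum>y\<in>S. fscale (f y) (unit_fun y))"
  using assms
  by (auto simp: fun_eq_iff sum_fun_apply fscale_def unit_fun_def supp_funs_def if_distrib cong: if_cong)

lemma supp_funs_subset_span:
  assumes "finite S"
  shows "supp_funs S \<subseteq> fun_vs.span (unit_fun ` S :: ('x \<Rightarrow> 'k::field) set)"
proof
  fix f :: "'x \<Rightarrow> 'k" assume "f \<in> supp_funs S"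
  then have "f = (\<Sum>y\<in>S. fscale (f y) (unit_fun y))" by (rule supp_funs_eq_sum[OF assms])
  also have "\<dots> \<in> fun_vs.span (unit_fun ` S)"
    by (intro fun_vs.span_sum fun_vs.span_scale fun_vs.span_base) auto
  finally show "f \<in> fun_vs.span (unit_fun ` S)" .
qed

lemma subspace_supp_funs: "fun_vs.subspace (supp_funs S :: ('x \<Rightarrow> 'k::field) set)"
  by (auto simp: fun_vs.subspace_def supp_funs_def fscale_def)

lemma dim_supp_funs:
  assumes "finite S"
  shows "fun_vs.dim (supp_funs S :: ('x \<Rightarrow> 'k::field) set) = card S"
proof -
  have inj: "inj_on (unit_fun :: 'x \<Rightarrow> 'x \<Rightarrow> 'k) S"
    by (auto simp: inj_on_def unit_fun_def fun_eq_iff)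
  have "unit_fun ` S \<subseteq> supp_funs S" by (auto simp: unit_fun_def supp_funs_def)
  then have span_eq: "fun_vs.span (unit_fun ` S) = fun_vs.span (supp_funs S :: ('x \<Rightarrow> 'k) set)"
    using supp_funs_subset_span[OF assms] subspace_supp_funs
    by (metis fun_vs.span_eq fun_vs.span_minimal fun_vs.span_span subset_antisym fun_vs.span_mono)
  have indep: "fun_vs.independent (unit_fun ` S :: ('x \<Rightarrow> 'k) set)"
  proof
    assume "fun_vs.dependent (unit_fun ` S :: ('x \<Rightarrow> 'k) set)"
    then obtain u where u: "\<exists>v\<in>unit_fun ` S. u v \<noteq> 0"
        "(\<Sum>v\<in>unit_fun ` S. fscale (u v) v) = (0 :: 'x \<Rightarrow> 'k)"
      using fun_vs.dependent_finite[of "unit_fun ` S"] assms by auto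
    from u(1) obtain y where y: "y \<in> S" "u (unit_fun y) \<noteq> 0" by auto
    have "(\<Sum>v\<in>unit_fun ` S. fscale (u v) v) = (\<Sum>z\<in>S. fscale (u (unit_fun z)) (unit_fun z))"
      using sum.reindex[OF inj] by simp
    then have "0 = (\<Sum>z\<in>S. fscale (u (unit_fun z)) (unit_fun z)) y"
      using u(2) by simp
    also have "\<dots> = u (unit_fun y)"
      using y assms by (simp add: sum_fun_apply fscale_def unit_fun_def if_distrib cong: if_cong)
    finally show False using y by simp
  qed
  show ?thesis
    using fun_vs.dim_eq_card[OF span_eq indep] card_image[OF inj] by simp
qed

definition mat_unit :: "'p \<times> 'p \<Rightarrow> 'p \<Rightarrow> 'p \<Rightarrow> 'k::field" where
  "mat_unit pq = (\<lambda>p q. if p = fst pq \<and> q = snd pq then 1 else 0)"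

lemma supported_mats_subset_span:
  assumes S: "finite S"
  shows "{M. \<forall>p q. (p, q) \<notin> S \<longrightarrow> M p q = 0} \<subseteq> mat_vs.span (mat_unit ` S :: ('p \<Rightarrow> 'p \<Rightarrow> 'k::field) set)"
proof
  fix M :: "'p \<Rightarrow> 'p \<Rightarrow> 'k" assume M: "M \<in> {M. \<forall>p q. (p, q) \<notin> S \<longrightarrow> M p q = 0}"
  have "M = (\<Sum>pq\<in>S. mat_scale (M (fst pq) (snd pq)) (mat_unit pq))"
  proof (intro ext)
    fix p q
    have "(\<Sum>pq\<in>S. mat_scale (M (fst pq) (snd pq)) (mat_unit pq)) p q
        = (\<Sum>pq\<in>S. if pq = (p, q) then M p q else 0)"
      unfolding sum_fun_apply by (rule sum.cong) (auto simp: mat_scale_def mat_unit_def)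
    also have "\<dots> = M p q" using M S by (cases "(p, q) \<in> S") auto
    finally show "M p q = (\<Sum>pq\<in>S. mat_scale (M (fst pq) (snd pq)) (mat_unit pq)) p q" by simp
  qed
  also have "\<dots> \<in> mat_vs.span (mat_unit ` S)"
    by (rule mat_vs.span_sum) (auto intro: mat_vs.span_scale mat_vs.span_base)
  finally show "M \<in> mat_vs.span (mat_unit ` S)" .
qed

lemma if_sum: "(if c then sum f S else 0) = (\<Sum>i\<in>S. if c then f i else 0)"
  by simp

lemma if_mult_right: "(if c then a else 0) * (k::'k::field) = (if c then a * k else 0)"
  by simp

lemma if_sum_mult: "(if c then (\<Sum>p\<in>S. a p * m p) * k else 0)
  = (\<Sum>p\<in>S. if c then a p * k * m p else (0::'k::field))"
  by (cases c) (simp_all add: sum_distrib_right sum_distrib_left mult_ac)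

lemma sum_if_mult_left:
  "(k::'k::field) * (\<Sum>i\<in>S. if c i then f i else 0) = (\<Sum>i\<in>S. if c i then k * f i else 0)"
  by (simp add: sum_distrib_left if_distrib cong: if_cong)

lemma sum_reindex_if:
  assumes S: "finite S" and g: "\<And>x. x \<in> S \<Longrightarrow> K x \<Longrightarrow> g x \<in> S"
  shows "(\<Sum>y\<in>S. if A y then (\<Sum>x\<in>S. if K x \<and> g x = y then c x else 0) else 0)
       = (\<Sum>x\<in>S. if K x \<and> A (g x) then c x else (0::'k::comm_monoid_add))"
proof -
  have "(\<Sum>y\<in>S. if A y then (\<Sum>x\<in>S. if K x \<and> g x = y then c x else 0) else 0)
      = (\<Sum>x\<in>S. \<Sum>y\<in>S. if K x \<and> y = g x \<and> A y then c x else 0)"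
    by (subst sum.swap) (auto intro!: sum.cong)
  also have "\<dots> = (\<Sum>x\<in>S. if K x \<and> A (g x) then c x else 0)"
  proof (rule sum.cong[OF refl])
    fix x assume x: "x \<in> S"
    show "(\<Sum>y\<in>S. if K x \<and> y = g x \<and> A y then c x else 0) = (if K x \<and> A (g x) then c x else 0)"
    proof (cases "K x")
      case True
      then have "(\<Sum>y\<in>S. if K x \<and> y = g x \<and> A y then c x else 0)
          = (\<Sum>y\<in>S. if y = g x then (if A (g x) then c x else 0) else 0)"
        by (intro sum.cong) auto
      also have "\<dots> = (if A (g x) then c x else 0)" using g[OF x True] S by simp
      finally show ?thesis using True by simp
    qed simp
  qed
  finally show ?thesis .
qed

lemma sum_indicator_unique:
  assumes "finite S" "\<And>y y'. y \<in> S \<Longrightarrow> y' \<in> S \<Longrightarrow> Q y \<Longrightarrow> Q y' \<Longrightarrow> y = y'"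
  shows "(\<Sum>y\<in>S. if Q y then 1 else 0) = (if \<exists>y\<in>S. Q y then 1 else (0::'k::field))"
proof (cases "\<exists>y\<in>S. Q y")
  case True
  then obtain y0 where y0: "y0 \<in> S" "Q y0" by blast
  have "(\<Sum>y\<in>S. if Q y then 1 else 0) = (\<Sum>y\<in>S. if y = y0 then 1 else (0::'k))"
    using assms(2) y0 by (intro sum.cong) auto
  then show ?thesis using True y0 assms(1) by simp
qed simp

section \<open>Paths\<close>

fun chain :: "'a set \<Rightarrow> ('a \<Rightarrow> 'v) \<Rightarrow> ('a \<Rightarrow> 'v) \<Rightarrow> 'v \<Rightarrow> 'a list \<Rightarrow> bool" where
  "chain Q1 s t v [] = True"
| "chain Q1 s t v (a # as) \<longleftrightarrow> a \<in> Q1 \<and> s a = v \<and> chain Q1 s t (t a) as"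

lemma chain_iff_nth:
  "chain Q1 s t v as \<longleftrightarrow> set as \<subseteq> Q1 \<and> (as \<noteq> [] \<longrightarrow> s (hd as) = v) \<and>
     (\<forall>i. Suc i < length as \<longrightarrow> t (as ! i) = s (as ! Suc i))"
proof (induction as arbitrary: v)
  case (Cons a as)
  have "(\<forall>i. Suc i < length (a # as) \<longrightarrow> t ((a # as) ! i) = s ((a # as) ! Suc i)) \<longleftrightarrow>
      (as \<noteq> [] \<longrightarrow> t a = s (hd as)) \<and> (\<forall>i. Suc i < length as \<longrightarrow> t (as ! i) = s (as ! Suc i))"
    by (auto simp: hd_conv_nth nth_Cons split: nat.splits)
  then show ?case using Cons.IH[of "t a"] by auto
qed simp

lemma chain_append:
  "chain Q1 s t v (xs @ ys) \<longleftrightarrow> chain Q1 s t v xs \<and> chain Q1 s t (ptgt t (v, xs)) ys"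
  by (induction xs arbitrary: v) (auto simp: ptgt_def)

lemma is_path_iff_chain: "is_path Q0 Q1 s t (v, as) \<longleftrightarrow> v \<in> Q0 \<and> chain Q1 s t v as"
  unfolding is_path_def chain_iff_nth by auto

lemma split_at_elem:
  assumes "xs1 @ ys1 = xs @ a # ys"
  shows "(\<exists>zs. xs1 = xs @ a # zs \<and> ys = zs @ ys1) \<or> (\<exists>zs. ys1 = zs @ a # ys \<and> xs = xs1 @ zs)"
  using assms by (auto simp: append_eq_append_conv2 append_eq_Cons_conv)

lemma split_at_elem3:
  assumes "xs @ a # ys = u @ m @ w"
  shows "(\<exists>u'. u = xs @ a # u' \<and> ys = u' @ m @ w) \<or> (\<exists>w'. w = w' @ a # ys \<and> xs = u @ m @ w')
     \<or> (\<exists>m1 m2. m = m1 @ a # m2 \<and> xs = u @ m1 \<and> ys = m2 @ w)"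
proof -
  have "u @ (m @ w) = xs @ a # ys" using assms by simp
  from split_at_elem[OF this] show ?thesis
  proof
    assume "\<exists>zs. m @ w = zs @ a # ys \<and> xs = u @ zs"
    then obtain zs where zs: "m @ w = zs @ a # ys" "xs = u @ zs" by blast
    from split_at_elem[OF zs(1)] show ?thesis using zs(2) by auto
  qed blast
qed

locale monomial_quiver =
  fixes Q0 :: "'v set" and Q1 :: "'a set" and s t :: "'a \<Rightarrow> 'v" and Z :: "('v,'a) path set"
  assumes finite_Q: "finite_quiver Q0 Q1 s t"
    and connected_Q: "connected_quiver Q0 Q1 s t"
    and acyclic_Q: "acyclic_quiver Q0 Q1 s t"
    and minimal_Z: "minimal_relations Q0 Q1 s t Z"
begin

abbreviation "P \<equiv> paths Q0 Q1 s t"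
abbreviation "B \<equiv> basisB Q0 Q1 s t Z"
abbreviation composable :: "('v,'a) path \<Rightarrow> ('v,'a) path \<Rightarrow> bool" where
  "composable p q \<equiv> ptgt t p = psrc q"

definition arrow_path :: "'a \<Rightarrow> ('v,'a) path" where
  "arrow_path a = (s a, [a])"

lemma arrow_ends_in_Q0: "a \<in> Q1 \<Longrightarrow> s a \<in> Q0 \<and> t a \<in> Q0"
  using finite_Q by (auto simp: finite_quiver_def)

lemma path_iff_chain: "(v, as) \<in> P \<longleftrightarrow> v \<in> Q0 \<and> chain Q1 s t v as"
  by (simp add: paths_def is_path_iff_chain)

lemma path_iff_chain': "p \<in> P \<longleftrightarrow> fst p \<in> Q0 \<and> chain Q1 s t (fst p) (snd p)"
  using path_iff_chain[of "fst p" "snd p"] by simp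

lemma vertex_path: "v \<in> Q0 \<Longrightarrow> (v, []) \<in> P"
  by (simp add: path_iff_chain)

lemma ptgt_in_Q0: "p \<in> P \<Longrightarrow> ptgt t p \<in> Q0"
proof -
  have "chain Q1 s t v as \<Longrightarrow> as \<noteq> [] \<Longrightarrow> ptgt t (v, as) \<in> Q0" for v as
    by (induction as arbitrary: v) (auto simp: ptgt_def arrow_ends_in_Q0 split: if_splits)
  then show "p \<in> P \<Longrightarrow> ptgt t p \<in> Q0"
    by (cases "snd p = []") (auto simp: path_iff_chain' ptgt_def)
qed

lemma append_in_paths_iff: "(v, xs @ ys) \<in> P \<longleftrightarrow> (v, xs) \<in> P \<and> (ptgt t (v, xs), ys) \<in> P"
  using ptgt_in_Q0[of "(v, xs)"] by (auto simp: path_iff_chain chain_append)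

lemma pcat_in_paths: "p \<in> P \<Longrightarrow> q \<in> P \<Longrightarrow> composable p q \<Longrightarrow> pcat p q \<in> P"
  by (cases p, cases q) (auto simp: pcat_def append_in_paths_iff psrc_def)

lemma ptgt_pcat: "composable p q \<Longrightarrow> ptgt t (pcat p q) = ptgt t q"
  by (cases p, cases q) (auto simp: pcat_def ptgt_def psrc_def)

lemma psrc_pcat: "psrc (pcat p q) = psrc p"
  by (simp add: pcat_def psrc_def)

lemma pcat_assoc: "pcat (pcat p q) r = pcat p (pcat q r)"
  by (simp add: pcat_def)

lemma ptgt_neq_start:
  assumes "(v, as) \<in> P" "as \<noteq> []"
  shows "ptgt t (v, as) \<noteq> v"
proof -
  have "plen (v, as) \<ge> 1" using assms(2) by (simp add: plen_def Suc_le_eq)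
  then show ?thesis using acyclic_Q assms(1) by (auto simp: acyclic_quiver_def psrc_def)
qed

lemma arrow_path_in_paths: "a \<in> Q1 \<Longrightarrow> arrow_path a \<in> P"
  by (auto simp: arrow_path_def path_iff_chain arrow_ends_in_Q0)

lemma arrow_not_loop: "a \<in> Q1 \<Longrightarrow> s a \<noteq> t a"
  using ptgt_neq_start[of "s a" "[a]"] arrow_path_in_paths[of a] by (auto simp: arrow_path_def ptgt_def)

lemma distinct_path: "(v, as) \<in> P \<Longrightarrow> distinct as"
proof (rule ccontr)
  assume p: "(v, as) \<in> P" and "\<not> distinct as"
  then obtain xs ys zs a where as: "as = xs @ a # ys @ a # zs"
    using not_distinct_decomp by fastforce
  define u where "u = ptgt t (v, xs)"
  have "(u, (a # ys) @ a # zs) \<in> P" using p as append_in_paths_iff u_def by auto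
  then have c1: "(u, a # ys) \<in> P" and c2: "(ptgt t (u, a # ys), a # zs) \<in> P"
    using append_in_paths_iff by blast+
  have "u = s a" "ptgt t (u, a # ys) = s a" using c1 c2 by (simp_all add: path_iff_chain)
  then show False using ptgt_neq_start[OF c1] by simp
qed

lemma finite_paths: "finite P"
proof -
  have "P \<subseteq> Q0 \<times> {as. set as \<subseteq> Q1 \<and> length as \<le> card Q1}"
  proof
    fix p assume p: "p \<in> P"
    have "distinct (snd p)" "set (snd p) \<subseteq> Q1"
      using distinct_path[of "fst p" "snd p"] p by (auto simp: path_iff_chain' chain_iff_nth)
    moreover have "finite Q1" using finite_Q by (simp add: finite_quiver_def)
    ultimately have "length (snd p) \<le> card Q1" by (metis distinct_card card_mono)
    then show "p \<in> Q0 \<times> {as. set as \<subseteq> Q1 \<and> length as \<le> card Q1}"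
      using p \<open>set (snd p) \<subseteq> Q1\<close> by (auto simp: path_iff_chain' mem_Times_iff)
  qed
  moreover have "finite (Q0 \<times> {as. set as \<subseteq> Q1 \<and> length as \<le> card Q1})"
    using finite_Q finite_lists_length_le by (auto simp: finite_quiver_def)
  ultimately show ?thesis by (rule finite_subset)
qed

lemma parallel_path_hd:
  assumes "e \<in> P" "psrc e = s a" "ptgt t e = t a" "snd e = a # r"
  shows "r = []"
proof (rule ccontr)
  assume r: "r \<noteq> []"
  have "(fst e, [a] @ r) \<in> P" using assms(1,4) by (cases e) auto
  then have "(ptgt t (fst e, [a]), r) \<in> P" using append_in_paths_iff by blast
  then have "(t a, r) \<in> P" by (simp add: ptgt_def)
  moreover have "ptgt t (t a, r) = t a" using assms(3,4) r by (cases e) (auto simp: ptgt_def)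
  ultimately show False using ptgt_neq_start r by blast
qed

lemma parallel_path_last:
  assumes "e \<in> P" "psrc e = s a" "ptgt t e = t a" "snd e = r @ [a]"
  shows "r = []"
proof (rule ccontr)
  assume r: "r \<noteq> []"
  have "(fst e, r @ [a]) \<in> P" using assms(1,4) by (cases e) auto
  then have "(fst e, r) \<in> P" "ptgt t (fst e, r) = s a"
    using append_in_paths_iff by (auto simp: path_iff_chain)
  then show False using ptgt_neq_start r assms(2) by (auto simp: psrc_def)
qed

lemma relation_in_paths: "z \<in> Z \<Longrightarrow> z \<in> P"
  using minimal_Z by (auto simp: minimal_relations_def)

lemma relation_length: "z \<in> Z \<Longrightarrow> length (snd z) \<ge> 2"
  using minimal_Z by (auto simp: minimal_relations_def plen_def)

lemma subpath_iff:
  assumes q: "q \<in> P" "snd q \<noteq> []"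
  shows "subpath Q0 Q1 s t q p \<longleftrightarrow> p \<in> P \<and> (\<exists>u w. snd p = u @ snd q @ w)"
proof
  assume "subpath Q0 Q1 s t q p"
  then obtain u w where "u \<in> P" "w \<in> P" "composable u q" "composable q w" "p = pcat (pcat u q) w"
    by (auto simp: subpath_def)
  moreover have "pcat u q \<in> P" using pcat_in_paths calculation q by blast
  ultimately have "p \<in> P" using pcat_in_paths ptgt_pcat by metis
  then show "p \<in> P \<and> (\<exists>u w. snd p = u @ snd q @ w)"
    using \<open>p = pcat (pcat u q) w\<close> by (auto simp: pcat_def)
next
  assume "p \<in> P \<and> (\<exists>u w. snd p = u @ snd q @ w)"
  then obtain u w where p: "(fst p, u @ snd q @ w) \<in> P" "snd p = u @ snd q @ w"
    by (metis prod.collapse)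
  define x where "x = ptgt t (fst p, u)"
  have h: "(fst p, u) \<in> P" "(x, snd q) \<in> P" "(ptgt t (x, snd q), w) \<in> P"
    using p(1) append_in_paths_iff x_def by blast+
  have "x = fst q" using h(2) q path_iff_chain' by (cases "snd q") auto
  moreover have "ptgt t (x, snd q) = ptgt t q" using q(2) by (simp add: ptgt_def)
  moreover have "p = pcat (pcat (fst p, u) q) (ptgt t q, w)"
    using p(2) by (simp add: pcat_def prod_eq_iff)
  ultimately show "subpath Q0 Q1 s t q p"
    unfolding subpath_def psrc_def using h q(1) x_def by (metis fst_conv)
qed

lemma basis_iff: "p \<in> B \<longleftrightarrow> p \<in> P \<and> (\<forall>z\<in>Z. \<not> (\<exists>u w. snd p = u @ snd z @ w))"
proof -
  have "\<And>z. z \<in> Z \<Longrightarrow> snd z \<noteq> []" using relation_length by fastforce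
  then show ?thesis unfolding basisB_def using subpath_iff relation_in_paths by auto
qed

lemma basis_in_paths: "p \<in> B \<Longrightarrow> p \<in> P"
  by (simp add: basis_iff)

lemma relation_not_in_basis: "z \<in> Z \<Longrightarrow> z \<notin> B"
  by (metis basis_iff append.left_neutral append_Nil2)

lemma arrow_in_basis: "a \<in> Q1 \<Longrightarrow> arrow_path a \<in> B"
proof -
  assume a: "a \<in> Q1"
  have False if "z \<in> Z" "[a] = u @ snd z @ w" for z u w
  proof -
    have "length [a] = length u + length (snd z) + length w" using that(2) by simp
    then show False using relation_length[OF that(1)] by simp
  qed
  then show ?thesis using arrow_path_in_paths[OF a] by (auto simp: basis_iff arrow_path_def)
qed

lemma basis_append_split: "(v, xs @ ys) \<in> B \<Longrightarrow> (v, xs) \<in> B \<and> (ptgt t (v, xs), ys) \<in> B"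
  unfolding basis_iff using append_in_paths_iff by (metis append.assoc snd_conv)

lemma pcat_in_basis_factors:
  "p \<in> P \<Longrightarrow> q \<in> P \<Longrightarrow> composable p q \<Longrightarrow> pcat p q \<in> B \<Longrightarrow> p \<in> B \<and> q \<in> B"
  using basis_append_split[of "fst p" "snd p" "snd q"]
  by (cases p, cases q) (auto simp: pcat_def psrc_def)

section \<open>The ideal generated by Z\<close>

abbreviation kQ :: "(('v,'a) path \<Rightarrow> 'k::field) set" where "kQ \<equiv> pathalg Q0 Q1 s t"
abbreviation I :: "(('v,'a) path \<Rightarrow> 'k::field) set" where "I \<equiv> gen_ideal Q0 Q1 s t Z"
abbreviation pm :: "(('v,'a) path \<Rightarrow> 'k::field) \<Rightarrow> _ \<Rightarrow> _" where "pm \<equiv> pmul Q0 Q1 s t"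
abbreviation mp :: "(('v,'a) path \<Rightarrow> ('v,'a) path \<Rightarrow> 'k::field) \<Rightarrow> _ \<Rightarrow> _" where
  "mp \<equiv> mapp Q0 Q1 s t"

lemma pmul_eq_double_sum:
  "pm f g r = (\<Sum>p\<in>P. \<Sum>q\<in>P. if composable p q \<and> pcat p q = r then f p * g q else 0)"
proof -
  let ?S = "{(p,q). p \<in> P \<and> q \<in> P \<and> composable p q \<and> pcat p q = r}"
  have "pm f g r = (\<Sum>pq\<in>?S. f (fst pq) * g (snd pq))" by (simp add: pmul_def)
  also have "\<dots> = (\<Sum>pq\<in>P \<times> P. if composable (fst pq) (snd pq) \<and> pcat (fst pq) (snd pq) = r
      then f (fst pq) * g (snd pq) else 0)"
    by (rule sum.mono_neutral_cong_left) (auto simp: finite_paths)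
  also have "\<dots> = (\<Sum>(p,q)\<in>P \<times> P. if composable p q \<and> pcat p q = r then f p * g q else 0)"
    by (rule sum.cong) (auto simp: case_prod_beta)
  finally show ?thesis by (simp add: sum.cartesian_product)
qed

lemma pmul_in_kQ: "pm f g \<in> kQ"
proof -
  have "pm f g r = 0" if r: "r \<notin> P" for r
  proof -
    have "\<not> (composable p q \<and> pcat p q = r)" if "p \<in> P" "q \<in> P" for p q
      using pcat_in_paths r that by blast
    then show ?thesis unfolding pmul_eq_double_sum by (intro sum.neutral ballI) auto
  qed
  then show ?thesis by (simp add: pathalg_def)
qed

lemma delta_in_kQ: "p \<in> P \<Longrightarrow> delta p \<in> kQ"
  by (auto simp: pathalg_def delta_def)

lemma kQ_diff: "x \<in> kQ \<Longrightarrow> y \<in> kQ \<Longrightarrow> (\<lambda>r. x r - y r) \<in> kQ"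
  by (simp add: pathalg_def)

lemma pmul_delta_right:
  "y \<in> P \<Longrightarrow> pm f (delta y) r = (\<Sum>x\<in>P. if composable x y \<and> pcat x y = r then f x else 0)"
  unfolding pmul_eq_double_sum
proof (rule sum.cong[OF refl])
  fix x assume y: "y \<in> P"
  have "(\<Sum>q\<in>P. if composable x q \<and> pcat x q = r then f x * delta y q else 0)
      = (\<Sum>q\<in>P. if q = y then (if composable x y \<and> pcat x y = r then f x else 0) else 0)"
    by (rule sum.cong) (auto simp: delta_def)
  also have "\<dots> = (if composable x y \<and> pcat x y = r then f x else 0)" using y by (simp add: finite_paths)
  finally show "(\<Sum>q\<in>P. if composable x q \<and> pcat x q = r then f x * delta y q else 0)
      = (if composable x y \<and> pcat x y = r then f x else 0)" .
qed

lemma pmul_delta_left: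
  "x \<in> P \<Longrightarrow> pm (delta x) g r = (\<Sum>y\<in>P. if composable x y \<and> pcat x y = r then g y else 0)"
proof -
  assume x: "x \<in> P"
  have "pm (delta x) g r = (\<Sum>p\<in>P. if p = x
      then (\<Sum>q\<in>P. if composable x q \<and> pcat x q = r then g q else 0) else 0)"
    unfolding pmul_eq_double_sum by (rule sum.cong) (auto simp: delta_def cong: if_cong)
  also have "\<dots> = (\<Sum>y\<in>P. if composable x y \<and> pcat x y = r then g y else 0)"
    using x by (simp add: finite_paths)
  finally show ?thesis .
qed

lemma pmul_delta_delta:
  "x \<in> P \<Longrightarrow> y \<in> P \<Longrightarrow>
    pm (delta x) (delta y) = (if composable x y then delta (pcat x y) else (\<lambda>_. 0 :: 'k::field))"
proof
  fix r assume x: "x \<in> P" and y: "y \<in> P"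
  have "pm (delta x) (delta y) r
      = (\<Sum>q\<in>P. if q = y then (if composable x y \<and> pcat x y = r then 1 else 0) else (0::'k))"
    unfolding pmul_delta_left[OF x] by (rule sum.cong) (auto simp: delta_def)
  also have "\<dots> = (if composable x y \<and> pcat x y = r then 1 else 0)" using y by (simp add: finite_paths)
  finally show "pm (delta x) (delta y) r
      = (if composable x y then delta (pcat x y) else (\<lambda>_. 0 :: 'k)) r"
    by (auto simp: delta_def)
qed

lemma mapp_delta: "p \<in> P \<Longrightarrow> mp M (delta p) = M p"
proof
  fix q assume p: "p \<in> P"
  have "mp M (delta p) q = (\<Sum>p'\<in>P. if p' = p then M p q else 0)"
    unfolding mapp_def by (rule sum.cong) (auto simp: delta_def)
  then show "mp M (delta p) q = M p q" using p by (simp add: finite_paths)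
qed

lemma mapp_zero: "mp M (\<lambda>_. 0) = (\<lambda>_. 0)"
  by (simp add: mapp_def)

lemma ideal_vanishes_on_basis: "x \<in> I \<Longrightarrow> x \<in> kQ \<and> (\<forall>r\<in>B. x r = 0)"
proof (induction rule: gen_ideal.induct)
  case (gen z)
  then show ?case
    using relation_in_paths relation_not_in_basis by (auto simp: pathalg_def delta_def)
next
  case (lmult x a)
  have "pm a x r = 0" if r: "r \<in> B" for r
  proof -
    have "\<And>p q. p \<in> P \<Longrightarrow> q \<in> P \<Longrightarrow> (if composable p q \<and> pcat p q = r then a p * x q else 0) = 0"
      using pcat_in_basis_factors r lmult.IH by auto
    then show ?thesis unfolding pmul_eq_double_sum by (simp add: sum.neutral)
  qed
  then show ?case using pmul_in_kQ by blast
next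
  case (rmult x a)
  have "pm x a r = 0" if r: "r \<in> B" for r
  proof -
    have "\<And>p q. p \<in> P \<Longrightarrow> q \<in> P \<Longrightarrow> (if composable p q \<and> pcat p q = r then x p * a q else 0) = 0"
      using pcat_in_basis_factors r rmult.IH by auto
    then show ?thesis unfolding pmul_eq_double_sum by (simp add: sum.neutral)
  qed
  then show ?case using pmul_in_kQ by blast
qed (auto simp: pathalg_def)

lemma ideal_lin_comb:
  "finite S \<Longrightarrow> (\<And>p. p \<in> S \<Longrightarrow> g p \<in> I) \<Longrightarrow> (\<lambda>r. \<Sum>p\<in>S. c p * g p r) \<in> I"
proof (induction S rule: finite_induct)
  case empty
  then show ?case by (simp add: gen_ideal.zero)
next
  case (insert x F)
  then have "(\<lambda>r. (\<lambda>r. c x * g x r) r + (\<lambda>r. \<Sum>p\<in>F. c p * g p r) r) \<in> I"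
    by (intro gen_ideal.add gen_ideal.smult) auto
  then show ?case using insert by simp
qed

text \<open>A path outside B is u z w with z in Z, so its delta is delta u * delta z * delta w.\<close>

lemma delta_in_ideal:
  assumes p: "p \<in> P" "p \<notin> B"
  shows "(delta p :: _ \<Rightarrow> 'k::field) \<in> I"
proof -
  obtain z u w where z: "z \<in> Z" "snd p = u @ snd z @ w" using p basis_iff by blast
  have zP: "z \<in> P" using relation_in_paths z by blast
  have "subpath Q0 Q1 s t z p"
    using subpath_iff[OF zP] relation_length z p(1) by fastforce
  then obtain U W where UW: "U \<in> P" "W \<in> P" "composable U z" "composable z W"
      "p = pcat (pcat U z) W"
    by (auto simp: subpath_def)
  have "pm (pm (delta U) (delta z)) (delta W) = (delta p :: _ \<Rightarrow> 'k)"
    using UW zP by (simp add: pmul_delta_delta pcat_in_paths ptgt_pcat)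
  moreover have "pm (pm (delta U) (delta z)) (delta W) \<in> (I :: (_ \<Rightarrow> 'k) set)"
    using z UW zP by (intro gen_ideal.rmult gen_ideal.lmult gen_ideal.gen delta_in_kQ)
  ultimately show ?thesis by simp
qed

lemma ideal_iff: "x \<in> I \<longleftrightarrow> x \<in> kQ \<and> (\<forall>r\<in>B. x r = 0)"
proof
  assume x: "x \<in> kQ \<and> (\<forall>r\<in>B. x r = 0)"
  have "(\<lambda>r. \<Sum>p\<in>P - B. x p * delta p r) \<in> I"
    using delta_in_ideal finite_paths by (intro ideal_lin_comb) auto
  moreover have "(\<lambda>r. \<Sum>p\<in>P - B. x p * delta p r) = x"
  proof
    fix r
    have "(\<Sum>p\<in>P - B. x p * delta p r) = (\<Sum>p\<in>P - B. if p = r then x r else 0)"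
      by (rule sum.cong) (auto simp: delta_def)
    also have "\<dots> = x r"
    proof -
      have "r \<notin> P \<Longrightarrow> x r = 0" using x unfolding pathalg_def by blast
      then show ?thesis using x finite_paths by (cases "r \<in> P - B") auto
    qed
    finally show "(\<Sum>p\<in>P - B. x p * delta p r) = x r" .
  qed
  ultimately show "x \<in> I" by simp
qed (rule ideal_vanishes_on_basis)

section \<open>Derivation lifts\<close>

abbreviation EM :: "(('v,'a) path \<Rightarrow> ('v,'a) path \<Rightarrow> 'k::field) set" where
  "EM \<equiv> endo_mats Q0 Q1 s t"
abbreviation Der :: "(('v,'a) path \<Rightarrow> ('v,'a) path \<Rightarrow> 'k::field) set" where
  "Der \<equiv> der_lifts Q0 Q1 s t Z"
abbreviation Inn :: "(('v,'a) path \<Rightarrow> ('v,'a) path \<Rightarrow> 'k::field) set" where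
  "Inn \<equiv> inn_lifts Q0 Q1 s t Z"

text \<open>The Leibniz rule D(pq) = p D(q) + D(p) q for paths p, q, compared at the coordinates
  r in B, i.e.\ modulo I.\<close>

definition leibniz_mod_I :: "(('v,'a) path \<Rightarrow> ('v,'a) path \<Rightarrow> 'k::field) \<Rightarrow> bool" where
  "leibniz_mod_I M \<longleftrightarrow> (\<forall>p\<in>P. \<forall>q\<in>P. \<forall>r\<in>B.
     (if composable p q then M (pcat p q) r else 0) =
     (\<Sum>q'\<in>P. if composable p q' \<and> pcat p q' = r then M q q' else 0) +
     (\<Sum>p'\<in>P. if composable p' q \<and> pcat p' q = r then M p p' else 0))"

text \<open>Since I is spanned by the paths outside B, this says that M maps I into I.\<close>

definition maps_ideal :: "(('v,'a) path \<Rightarrow> ('v,'a) path \<Rightarrow> 'k::field) \<Rightarrow> bool" where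
  "maps_ideal M \<longleftrightarrow> (\<forall>p r. p \<notin> B \<longrightarrow> r \<in> B \<longrightarrow> M p r = 0)"

lemma leibniz_mod_ID:
  "leibniz_mod_I M \<Longrightarrow> p \<in> P \<Longrightarrow> q \<in> P \<Longrightarrow> r \<in> B \<Longrightarrow>
     (if composable p q then M (pcat p q) r else 0) =
     (\<Sum>q'\<in>P. if composable p q' \<and> pcat p q' = r then M q q' else 0) +
     (\<Sum>p'\<in>P. if composable p' q \<and> pcat p' q = r then M p p' else 0)"
  by (simp add: leibniz_mod_I_def)

lemma leibniz_mod_I_cong:
  assumes MN: "\<And>p r. p \<in> P \<Longrightarrow> r \<in> B \<Longrightarrow> M p r = N p r"
  shows "leibniz_mod_I M \<longleftrightarrow> leibniz_mod_I N"
proof -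
  have "(\<Sum>q'\<in>P. if composable p q' \<and> pcat p q' = r then M q q' else 0)
      = (\<Sum>q'\<in>P. if composable p q' \<and> pcat p q' = r then N q q' else 0)"
    "(\<Sum>p'\<in>P. if composable p' q \<and> pcat p' q = r then M p p' else 0)
      = (\<Sum>p'\<in>P. if composable p' q \<and> pcat p' q = r then N p p' else 0)"
    "(if composable p q then M (pcat p q) r else 0) = (if composable p q then N (pcat p q) r else 0)"
    if p: "p \<in> P" and q: "q \<in> P" and r: "r \<in> B" for p q r
  proof -
    show "(\<Sum>q'\<in>P. if composable p q' \<and> pcat p q' = r then M q q' else 0)
      = (\<Sum>q'\<in>P. if composable p q' \<and> pcat p q' = r then N q q' else 0)"
      by (rule sum.cong) (use pcat_in_basis_factors MN p q r in metis)+
    show "(\<Sum>p'\<in>P. if composable p' q \<and> pcat p' q = r then M p p' else 0)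
      = (\<Sum>p'\<in>P. if composable p' q \<and> pcat p' q = r then N p p' else 0)"
      by (rule sum.cong) (use pcat_in_basis_factors MN p q r in metis)+
    show "(if composable p q then M (pcat p q) r else 0) = (if composable p q then N (pcat p q) r else 0)"
      using MN pcat_in_paths p q r by simp
  qed
  then show ?thesis unfolding leibniz_mod_I_def by simp
qed

lemma endo_mats_zero: "M \<in> EM \<Longrightarrow> p \<notin> P \<or> q \<notin> P \<Longrightarrow> M p q = 0"
  unfolding endo_mats_def by blast

lemma mapp_in_kQ: "M \<in> EM \<Longrightarrow> mp M x \<in> kQ"
  by (simp add: pathalg_def mapp_def endo_mats_zero)

lemma der_lift_leibniz:
  assumes M: "(M :: _ \<Rightarrow> _ \<Rightarrow> 'k::field) \<in> Der"
  shows "leibniz_mod_I M"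
  unfolding leibniz_mod_I_def
proof (intro ballI)
  fix p q r assume p: "p \<in> P" and q: "q \<in> P" and r: "r \<in> B"
  have "(\<lambda>r. mp M (pm (delta p) (delta q)) r - pm (delta p) (mp M (delta q)) r
      - pm (mp M (delta p)) (delta q) r) \<in> (I :: (_ \<Rightarrow> 'k) set)"
    using M delta_in_kQ[OF p] delta_in_kQ[OF q] unfolding der_lifts_def by blast
  then have "mp M (pm (delta p) (delta q)) r - pm (delta p) (mp M (delta q)) r
      - pm (mp M (delta p)) (delta q) r = 0"
    using r unfolding ideal_iff by blast
  then have "mp M (pm (delta p) (delta q)) r
      = pm (delta p) (mp M (delta q)) r + pm (mp M (delta p)) (delta q) r"
    by (simp add: algebra_simps)
  moreover have "mp M (pm (delta p) (delta q)) r = (if composable p q then M (pcat p q) r else 0)"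
    by (simp add: pmul_delta_delta[OF p q] mapp_delta pcat_in_paths[OF p q] mapp_zero)
  ultimately show "(if composable p q then M (pcat p q) r else 0) =
     (\<Sum>q'\<in>P. if composable p q' \<and> pcat p q' = r then M q q' else 0) +
     (\<Sum>p'\<in>P. if composable p' q \<and> pcat p' q = r then M p p' else 0)"
    by (simp add: pmul_delta_left[OF p] pmul_delta_right[OF q] mapp_delta[OF p] mapp_delta[OF q])
qed

lemma der_lift_maps_ideal:
  assumes M: "(M :: _ \<Rightarrow> _ \<Rightarrow> 'k::field) \<in> Der"
  shows "maps_ideal M"
  unfolding maps_ideal_def
proof (intro allI impI)
  fix p r assume p: "p \<notin> B" and r: "r \<in> B"
  show "M p r = 0"
  proof (cases "p \<in> P")
    case True
    have "mp M (delta p) \<in> (I :: (_ \<Rightarrow> 'k) set)"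
      using M delta_in_ideal[OF True p] unfolding der_lifts_def by blast
    then show ?thesis using r unfolding ideal_iff mapp_delta[OF True] by blast
  next
    case False
    then show ?thesis using M by (simp add: der_lifts_def endo_mats_zero)
  qed
qed

lemma mapp_pmul:
  "mp M (pm x y) r = (\<Sum>p\<in>P. \<Sum>q\<in>P. x p * y q * (if composable p q then M (pcat p q) r else 0))"
proof -
  let ?f = "\<lambda>p q w. if composable p q \<and> pcat p q = w then x p * y q * M w r else 0"
  have "mp M (pm x y) r = (\<Sum>w\<in>P. \<Sum>p\<in>P. \<Sum>q\<in>P. ?f p q w)"
    unfolding mapp_def pmul_eq_double_sum
    by (simp add: sum_distrib_right if_mult_right cong: if_cong)
  also have "\<dots> = (\<Sum>p\<in>P. \<Sum>q\<in>P. \<Sum>w\<in>P. ?f p q w)"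
    by (subst sum.swap) (rule sum.cong[OF refl], rule sum.swap)
  also have "\<dots> = (\<Sum>p\<in>P. \<Sum>q\<in>P. x p * y q * (if composable p q then M (pcat p q) r else 0))"
  proof (intro sum.cong refl)
    fix p q assume pq: "p \<in> P" "q \<in> P"
    show "(\<Sum>w\<in>P. ?f p q w) = x p * y q * (if composable p q then M (pcat p q) r else 0)"
    proof (cases "composable p q")
      case True
      then have "(\<Sum>w\<in>P. ?f p q w) = (\<Sum>w\<in>P. if w = pcat p q then x p * y q * M (pcat p q) r else 0)"
        by (intro sum.cong) auto
      also have "\<dots> = x p * y q * M (pcat p q) r"
        using pcat_in_paths pq True by (simp add: finite_paths)
      finally show ?thesis using True by simp
    qed simp
  qed
  finally show ?thesis .
qed

lemma pmul_mapp_right: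
  "pm x (mp M y) r = (\<Sum>p\<in>P. \<Sum>q\<in>P.
     x p * y q * (\<Sum>q'\<in>P. if composable p q' \<and> pcat p q' = r then M q q' else 0))"
proof -
  let ?f = "\<lambda>p q q'. if composable p q' \<and> pcat p q' = r then x p * y q * M q q' else 0"
  have "pm x (mp M y) r = (\<Sum>p\<in>P. \<Sum>q'\<in>P. \<Sum>q\<in>P. ?f p q q')"
    unfolding mapp_def pmul_eq_double_sum
    by (simp add: sum_distrib_left if_sum mult.assoc cong: if_cong)
  also have "\<dots> = (\<Sum>p\<in>P. \<Sum>q\<in>P. \<Sum>q'\<in>P. ?f p q q')"
    by (rule sum.cong[OF refl]) (rule sum.swap)
  finally show ?thesis by (simp add: sum_if_mult_left)
qed

lemma pmul_mapp_left:
  "pm (mp M x) y r = (\<Sum>p\<in>P. \<Sum>q\<in>P.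
     x p * y q * (\<Sum>p'\<in>P. if composable p' q \<and> pcat p' q = r then M p p' else 0))"
proof -
  let ?f = "\<lambda>p q p'. if composable p' q \<and> pcat p' q = r then x p * y q * M p p' else 0"
  have "pm (mp M x) y r = (\<Sum>p'\<in>P. \<Sum>q\<in>P. \<Sum>p\<in>P. ?f p q p')"
    unfolding mapp_def pmul_eq_double_sum by (intro sum.cong refl) (rule if_sum_mult)
  also have "\<dots> = (\<Sum>q\<in>P. \<Sum>p\<in>P. \<Sum>p'\<in>P. ?f p q p')"
    by (subst sum.swap) (rule sum.cong[OF refl], rule sum.swap)
  also have "\<dots> = (\<Sum>p\<in>P. \<Sum>q\<in>P. \<Sum>p'\<in>P. ?f p q p')"
    by (rule sum.swap)
  finally show ?thesis by (simp add: sum_if_mult_left)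
qed

text \<open>By bilinearity, the Leibniz condition on paths gives it on all of kQ.\<close>

lemma der_liftsI:
  assumes ME: "(M :: _ \<Rightarrow> _ \<Rightarrow> 'k::field) \<in> EM" and mI: "maps_ideal M" and L: "leibniz_mod_I M"
  shows "M \<in> Der"
proof -
  have "mp M x \<in> I" if x: "x \<in> (I :: (_ \<Rightarrow> 'k) set)" for x
  proof -
    have "x p * M p r = 0" if "p \<in> P" "r \<in> B" for p r
      using x that mI ideal_iff unfolding maps_ideal_def by (metis mult_eq_0_iff)
    then have "\<forall>r\<in>B. mp M x r = 0" by (simp add: mapp_def sum.neutral)
    then show ?thesis using mapp_in_kQ[OF ME] by (simp add: ideal_iff)
  qed
  moreover have "(\<lambda>r. mp M (pm x y) r - pm x (mp M y) r - pm (mp M x) y r) \<in> I" for x y :: "_ \<Rightarrow> 'k"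
  proof -
    have "mp M (pm x y) r - pm x (mp M y) r - pm (mp M x) y r = 0" if r: "r \<in> B" for r
    proof -
      have "mp M (pm x y) r - pm x (mp M y) r - pm (mp M x) y r =
        (\<Sum>p\<in>P. \<Sum>q\<in>P. x p * y q * ((if composable p q then M (pcat p q) r else 0) -
           (\<Sum>q'\<in>P. if composable p q' \<and> pcat p q' = r then M q q' else 0) -
           (\<Sum>p'\<in>P. if composable p' q \<and> pcat p' q = r then M p p' else 0)))"
        unfolding mapp_pmul pmul_mapp_right pmul_mapp_left
        by (simp only: right_diff_distrib sum_subtractf)
      also have "\<dots> = 0"
        using L r by (simp add: leibniz_mod_I_def)
      finally show ?thesis .
    qed
    moreover have "(\<lambda>r. mp M (pm x y) r - pm x (mp M y) r - pm (mp M x) y r) \<in> kQ"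
      by (intro kQ_diff mapp_in_kQ[OF ME] pmul_in_kQ)
    ultimately show ?thesis by (simp add: ideal_iff)
  qed
  ultimately show ?thesis using ME by (simp add: der_lifts_def)
qed

lemma der_lifts_eq: "(Der :: (_ \<Rightarrow> _ \<Rightarrow> 'k::field) set) = {M \<in> EM. maps_ideal M \<and> leibniz_mod_I M}"
  using der_lift_leibniz der_lift_maps_ideal der_liftsI by (auto simp: der_lifts_def)

section \<open>Reduction modulo I and inner derivations\<close>

text \<open>Since B is a basis of kQ/I, dropping the coordinates outside B is reduction modulo I.\<close>

definition reduce :: "(('v,'a) path \<Rightarrow> ('v,'a) path \<Rightarrow> 'k::field) \<Rightarrow> (('v,'a) path \<Rightarrow> ('v,'a) path \<Rightarrow> 'k)" where
  "reduce M = (\<lambda>p q. if q \<in> B then M p q else 0)"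

lemma reduce_idem: "reduce (reduce M) = reduce M"
  by (simp add: reduce_def fun_eq_iff)

lemma reduce_endo: "M \<in> EM \<Longrightarrow> reduce M \<in> EM"
  by (auto simp: reduce_def endo_mats_def)

lemma reduce_der_lift:
  assumes M: "M \<in> Der"
  shows "reduce M \<in> Der"
proof (rule der_liftsI)
  show "reduce M \<in> EM" using M by (simp add: der_lifts_def reduce_endo)
  show "maps_ideal (reduce M)"
    using der_lift_maps_ideal[OF M] by (simp add: maps_ideal_def reduce_def)
  show "leibniz_mod_I (reduce M)"
    using der_lift_leibniz[OF M] leibniz_mod_I_cong[of "reduce M" M] by (simp add: reduce_def)
qed

lemma mapp_reduce: "r \<in> B \<Longrightarrow> mp (reduce M) x r = mp M x r"
  by (simp add: mapp_def reduce_def)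

definition ad :: "(('v,'a) path \<Rightarrow> 'k::field) \<Rightarrow> (('v,'a) path \<Rightarrow> ('v,'a) path \<Rightarrow> 'k)" where
  "ad c = (\<lambda>p q. if p \<in> P then pm c (delta p) q - pm (delta p) c q else 0)"

lemma ad_endo: "ad c \<in> EM"
proof -
  have "pm c (delta p) q = 0" "pm (delta p) c q = 0" if "q \<notin> P" for p q
    using pmul_in_kQ that unfolding pathalg_def by blast+
  then show ?thesis by (auto simp: endo_mats_def ad_def)
qed

lemma pmul_expand_right: "pm c x r = (\<Sum>q\<in>P. x q * pm c (delta q) r)"
proof -
  have "(\<Sum>q\<in>P. x q * pm c (delta q) r)
      = (\<Sum>q\<in>P. \<Sum>p\<in>P. if composable p q \<and> pcat p q = r then c p * x q else 0)"
    by (rule sum.cong[OF refl]) (simp add: pmul_delta_right sum_if_mult_left mult.commute cong: if_cong)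
  also have "\<dots> = (\<Sum>p\<in>P. \<Sum>q\<in>P. if composable p q \<and> pcat p q = r then c p * x q else 0)"
    by (rule sum.swap)
  finally show ?thesis by (simp add: pmul_eq_double_sum)
qed

lemma pmul_expand_left: "pm x c r = (\<Sum>p\<in>P. x p * pm (delta p) c r)"
  by (simp add: pmul_delta_left sum_if_mult_left pmul_eq_double_sum[of x c r])

lemma mapp_ad: "mp (ad c) x = (\<lambda>r. pm c x r - pm x c r)"
proof
  fix r
  have "mp (ad c) x r = (\<Sum>p\<in>P. x p * pm c (delta p) r - x p * pm (delta p) c r)"
    unfolding mapp_def by (rule sum.cong) (simp_all add: ad_def right_diff_distrib)
  also have "\<dots> = pm c x r - pm x c r"
    by (simp add: sum_subtractf pmul_expand_right[of c x r] pmul_expand_left[of x c r])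
  finally show "mp (ad c) x r = pm c x r - pm x c r" .
qed

lemma ad_add: "ad (c1 + c2) = ad c1 + ad (c2 :: _ \<Rightarrow> 'k::field)"
proof (intro ext)
  fix p q
  show "ad (c1 + c2) p q = (ad c1 + ad c2) p q"
  proof (cases "p \<in> P")
    case True
    have "pm (c1 + c2) (delta p) q = pm c1 (delta p) q + pm c2 (delta p) q"
      "pm (delta p) (c1 + c2) q = pm (delta p) c1 q + pm (delta p) c2 q"
      by (simp_all add: pmul_delta_right[OF True] pmul_delta_left[OF True] if_distrib[of "\<lambda>u. u + _"]
          sum.distrib[symmetric] cong: if_cong)
    then show ?thesis using True by (simp add: ad_def)
  qed (simp add: ad_def)
qed

lemma ad_scale: "ad (fscale k c) = mat_scale k (ad (c :: _ \<Rightarrow> 'k::field))"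
proof (intro ext)
  fix p q
  show "ad (fscale k c) p q = mat_scale k (ad c) p q"
  proof (cases "p \<in> P")
    case True
    have "pm (fscale k c) (delta p) q = k * pm c (delta p) q"
      "pm (delta p) (fscale k c) q = k * pm (delta p) c q"
      by (simp_all add: pmul_delta_right[OF True] pmul_delta_left[OF True] fscale_def
          sum_if_mult_left)
    then show ?thesis using True by (simp add: ad_def mat_scale_def right_diff_distrib)
  qed (simp add: ad_def mat_scale_def)
qed

lemma ad_zero: "ad (\<lambda>_. 0) = (\<lambda>_ _. 0 :: 'k::field)"
  by (auto simp: ad_def fun_eq_iff pmul_delta_right pmul_delta_left)

lemma inn_lifts_eq:
  "(Inn :: (_ \<Rightarrow> _ \<Rightarrow> 'k::field) set) = {M \<in> EM. \<exists>c\<in>kQ. reduce M = reduce (ad c)}"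
proof (intro set_eqI iffI)
  fix M :: "_ \<Rightarrow> _ \<Rightarrow> 'k" assume M: "M \<in> Inn"
  then obtain c where c: "c \<in> (kQ :: (_ \<Rightarrow> 'k) set)"
    and cx: "\<And>x. x \<in> (kQ :: (_ \<Rightarrow> 'k) set) \<Longrightarrow> (\<lambda>r. mp M x r - (pm c x r - pm x c r)) \<in> I"
    unfolding inn_lifts_def by blast
  have "M p r = ad c p r" if "p \<in> P" "r \<in> B" for p r
    using cx[OF delta_in_kQ[OF that(1)]] that unfolding ideal_iff
    by (simp add: ad_def mapp_delta)
  moreover have "M p r = 0" if "p \<notin> P" for p r
    using M that by (simp add: inn_lifts_def endo_mats_zero)
  ultimately have "reduce M = reduce (ad c)"
    by (auto simp: fun_eq_iff reduce_def ad_def)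
  then show "M \<in> {M \<in> EM. \<exists>c\<in>kQ. reduce M = reduce (ad c)}"
    using M c by (auto simp: inn_lifts_def)
next
  fix M :: "_ \<Rightarrow> _ \<Rightarrow> 'k" assume "M \<in> {M \<in> EM. \<exists>c\<in>kQ. reduce M = reduce (ad c)}"
  then obtain c where ME: "M \<in> EM" and c: "c \<in> (kQ :: (_ \<Rightarrow> 'k) set)"
    and eq: "reduce M = reduce (ad c)" by blast
  have "(\<lambda>r. mp M x r - (pm c x r - pm x c r)) \<in> I" for x :: "_ \<Rightarrow> 'k"
  proof -
    have "mp M x r = pm c x r - pm x c r" if "r \<in> B" for r
      using mapp_reduce[OF that, of M] mapp_reduce[OF that, of "ad c"] eq by (simp add: mapp_ad)
    moreover have "(\<lambda>r. mp M x r - (pm c x r - pm x c r)) \<in> kQ"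
      by (intro kQ_diff mapp_in_kQ[OF ME] pmul_in_kQ)
    ultimately show ?thesis by (simp add: ideal_iff)
  qed
  then show "M \<in> Inn" unfolding inn_lifts_def using ME c by blast
qed

lemma ad_inn_lift: "c \<in> kQ \<Longrightarrow> ad c \<in> Inn"
  by (auto simp: inn_lifts_eq ad_endo)

lemma ad_maps_ideal: "maps_ideal (ad (c :: _ \<Rightarrow> 'k::field))"
  unfolding maps_ideal_def
proof (intro allI impI)
  fix p r assume p: "p \<notin> B" and r: "r \<in> B"
  show "ad c p r = 0"
  proof (cases "p \<in> P")
    case True
    have "pm c (delta p) r = 0"
      unfolding pmul_delta_right[OF True]
    proof (intro sum.neutral ballI)
      fix x assume "x \<in> P"
      then have "\<not> (composable x p \<and> pcat x p = r)"
        using pcat_in_basis_factors True p r by blast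
      then show "(if composable x p \<and> pcat x p = r then c x else 0) = 0" by auto
    qed
    moreover have "pm (delta p) c r = 0"
      unfolding pmul_delta_left[OF True]
    proof (intro sum.neutral ballI)
      fix x assume "x \<in> P"
      then have "\<not> (composable p x \<and> pcat p x = r)"
        using pcat_in_basis_factors True p r by blast
      then show "(if composable p x \<and> pcat p x = r then c x else 0) = 0" by auto
    qed
    ultimately show ?thesis by (simp add: ad_def)
  qed (simp add: ad_def)
qed

text \<open>Both sides of the Leibniz rule expand into sums of coefficients of c over the ways of
  writing r as x p q, p x q or p q x; the terms for p x q cancel.\<close>

lemma ad_leibniz: "leibniz_mod_I (ad (c :: _ \<Rightarrow> 'k::field))"
  unfolding leibniz_mod_I_def
proof (intro ballI)
  fix p q r assume p: "p \<in> P" and q: "q \<in> P" and r: "r \<in> B"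
  define T where "T \<alpha> = (\<Sum>x\<in>P. if \<alpha> x then c x else 0)" for \<alpha>
  let ?left = "T (\<lambda>x. composable x p \<and> composable p q \<and> pcat (pcat x p) q = r)"
  let ?mid = "T (\<lambda>x. composable p x \<and> composable x q \<and> pcat (pcat p x) q = r)"
  let ?right = "T (\<lambda>x. composable q x \<and> composable p q \<and> pcat (pcat p q) x = r)"
  have c1: "(\<Sum>q'\<in>P. if composable p q' \<and> pcat p q' = r then pm c (delta q) q' else 0) = ?mid"
    unfolding pmul_delta_right[OF q] T_def
    by (subst sum_reindex_if) (auto simp: finite_paths pcat_in_paths psrc_pcat pcat_assoc p q intro!: sum.cong)
  have c2: "(\<Sum>q'\<in>P. if composable p q' \<and> pcat p q' = r then pm (delta q) c q' else 0) = ?right"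
    unfolding pmul_delta_left[OF q] T_def
    by (subst sum_reindex_if) (auto simp: finite_paths pcat_in_paths psrc_pcat pcat_assoc p q intro!: sum.cong)
  have R1: "(\<Sum>q'\<in>P. if composable p q' \<and> pcat p q' = r then ad c q q' else 0) = ?mid - ?right"
    unfolding c1[symmetric] c2[symmetric] sum_subtractf[symmetric]
    by (rule sum.cong) (simp_all add: ad_def q)
  have c3: "(\<Sum>p'\<in>P. if composable p' q \<and> pcat p' q = r then pm c (delta p) p' else 0) = ?left"
    unfolding pmul_delta_right[OF p] T_def
    by (subst sum_reindex_if) (auto simp: finite_paths pcat_in_paths ptgt_pcat p q intro!: sum.cong)
  have c4: "(\<Sum>p'\<in>P. if composable p' q \<and> pcat p' q = r then pm (delta p) c p' else 0) = ?mid"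
    unfolding pmul_delta_left[OF p] T_def
    by (subst sum_reindex_if) (auto simp: finite_paths pcat_in_paths ptgt_pcat p q intro!: sum.cong)
  have R2: "(\<Sum>p'\<in>P. if composable p' q \<and> pcat p' q = r then ad c p p' else 0) = ?left - ?mid"
    unfolding c3[symmetric] c4[symmetric] sum_subtractf[symmetric]
    by (rule sum.cong) (simp_all add: ad_def p)
  show "(if composable p q then ad c (pcat p q) r else 0) =
     (\<Sum>q'\<in>P. if composable p q' \<and> pcat p q' = r then ad c q q' else 0) +
     (\<Sum>p'\<in>P. if composable p' q \<and> pcat p' q = r then ad c p p' else 0)"
  proof (cases "composable p q")
    case True
    have pq: "pcat p q \<in> P" using pcat_in_paths p q True by blast
    have "pm c (delta (pcat p q)) r = ?left"
      unfolding pmul_delta_right[OF pq] T_def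
      by (rule sum.cong) (auto simp: psrc_pcat pcat_assoc True)
    moreover have "pm (delta (pcat p q)) c r = ?right"
      unfolding pmul_delta_left[OF pq] T_def
      by (rule sum.cong) (auto simp: ptgt_pcat True)
    ultimately show ?thesis unfolding R1 R2 using pq by (simp add: ad_def)
  next
    case False
    then have "?left = 0" "?right = 0" by (simp_all add: T_def)
    then show ?thesis unfolding R1 R2 using False by simp
  qed
qed

lemma ad_der_lift: "ad (c :: _ \<Rightarrow> 'k::field) \<in> Der"
  by (rule der_liftsI[OF ad_endo ad_maps_ideal ad_leibniz])

section \<open>Vertex rows and normalized derivations\<close>

definition vertex_rows :: "(('v,'a) path \<Rightarrow> ('v,'a) path \<Rightarrow> 'k::field) \<Rightarrow> (('v,'a) path \<Rightarrow> ('v,'a) path \<Rightarrow> 'k)" where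
  "vertex_rows M = (\<lambda>p q. if snd p = [] then M p q else 0)"

lemma sum_vertex_left:
  assumes r: "r \<in> P"
  shows "(\<Sum>q'\<in>P. if composable (u, []) q' \<and> pcat (u, []) q' = r then f q' else 0)
     = (if psrc r = u then f r else (0::'k::field))"
proof -
  have "(\<Sum>q'\<in>P. if composable (u, []) q' \<and> pcat (u, []) q' = r then f q' else 0)
      = (\<Sum>q'\<in>P. if q' = r then (if psrc r = u then f r else 0) else 0)"
    by (rule sum.cong) (auto simp: ptgt_def psrc_def pcat_def prod_eq_iff)
  then show ?thesis using r by (simp add: finite_paths)
qed

lemma sum_vertex_right:
  assumes r: "r \<in> P"
  shows "(\<Sum>p'\<in>P. if composable p' (v, []) \<and> pcat p' (v, []) = r then f p' else 0)
     = (if ptgt t r = v then f r else (0::'k::field))"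
proof -
  have "(\<Sum>p'\<in>P. if composable p' (v, []) \<and> pcat p' (v, []) = r then f p' else 0)
      = (\<Sum>p'\<in>P. if p' = r then (if ptgt t r = v then f r else 0) else 0)"
    by (rule sum.cong) (auto simp: psrc_def pcat_def)
  then show ?thesis using r by (simp add: finite_paths)
qed

lemma pmul_vertex_right:
  "w \<in> Q0 \<Longrightarrow> r \<in> P \<Longrightarrow> pm c (delta (w, [])) r = (if ptgt t r = w then c r else 0)"
  by (simp add: pmul_delta_right vertex_path sum_vertex_right)

lemma pmul_vertex_left:
  "w \<in> Q0 \<Longrightarrow> r \<in> P \<Longrightarrow> pm (delta (w, [])) c r = (if psrc r = w then c r else 0)"
  by (simp add: pmul_delta_left vertex_path sum_vertex_left)

lemma ad_vertex:
  "w \<in> Q0 \<Longrightarrow> r \<in> P \<Longrightarrow>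
     ad c (w, []) r = (if ptgt t r = w then c r else 0) - (if psrc r = w then c r else 0)"
  by (simp add: ad_def vertex_path pmul_vertex_right pmul_vertex_left)

lemma leibniz_vertices:
  assumes L: "leibniz_mod_I (M :: _ \<Rightarrow> _ \<Rightarrow> 'k::field)" and u: "u \<in> Q0" and v: "v \<in> Q0"
    and r: "r \<in> B"
  shows "(if u = v then M (u, []) r else 0)
     = (if psrc r = u then M (v, []) r else 0) + (if ptgt t r = v then M (u, []) r else 0)"
proof -
  have "(if composable (u, []) (v, []) then M (pcat (u, []) (v, [])) r else 0)
     = (if psrc r = u then M (v, []) r else 0) + (if ptgt t r = v then M (u, []) r else 0)"
    using leibniz_mod_ID[OF L vertex_path[OF u] vertex_path[OF v] r]
    by (simp only: sum_vertex_left[OF basis_in_paths[OF r]] sum_vertex_right[OF basis_in_paths[OF r]])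
  moreover have "(if composable (u, []) (v, []) then M (pcat (u, []) (v, [])) r else 0)
      = (if u = v then M (u, []) r else 0)"
    by (simp add: ptgt_def psrc_def pcat_def)
  ultimately show ?thesis by simp
qed

text \<open>On vertex rows a derivation agrees with the inner derivation of the element whose
  coefficient at r is the entry of r in the row of the target of r.\<close>

lemma leibniz_vertex_row:
  assumes L: "leibniz_mod_I (M :: _ \<Rightarrow> _ \<Rightarrow> 'k::field)" and w: "w \<in> Q0" and r: "r \<in> B"
  shows "M (w, []) r = (if ptgt t r = w then M (ptgt t r, []) r else 0)
                     - (if psrc r = w then M (ptgt t r, []) r else 0)"
proof (cases "w = ptgt t r")
  case True
  then show ?thesis using leibniz_vertices[OF L w w r] by auto
next
  case False
  have "ptgt t r \<in> Q0" using ptgt_in_Q0 basis_in_paths r by blast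
  then show ?thesis
    using leibniz_vertices[OF L w _ r, of "ptgt t r"] False by (auto simp: eq_neg_iff_add_eq_0 add.commute)
qed

lemma der_lift_vertex_rows:
  assumes M: "(M :: _ \<Rightarrow> _ \<Rightarrow> 'k::field) \<in> Der"
  shows "\<exists>c\<in>kQ. vertex_rows (reduce M) = vertex_rows (reduce (ad c))"
proof -
  define c :: "_ \<Rightarrow> 'k" where "c r = (if r \<in> B then M (ptgt t r, []) r else 0)" for r
  have "c \<in> kQ" using basis_in_paths by (auto simp: c_def pathalg_def)
  moreover have "vertex_rows (reduce M) p q = vertex_rows (reduce (ad c)) p q" for p q
  proof (cases "snd p = [] \<and> q \<in> B")
    case True
    then obtain w where p: "p = (w, [])" by (cases p) auto
    have q: "q \<in> B" using True by blast
    show ?thesis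
    proof (cases "w \<in> Q0")
      case True
      have "vertex_rows (reduce (ad c)) p q = ad c (w, []) q"
        using q by (simp add: vertex_rows_def reduce_def p)
      also have "\<dots> = (if ptgt t q = w then c q else 0) - (if psrc q = w then c q else 0)"
        by (rule ad_vertex[OF True basis_in_paths[OF q]])
      also have "\<dots> = M (w, []) q"
        unfolding leibniz_vertex_row[OF der_lift_leibniz[OF M] True q] using q by (simp add: c_def)
      finally show ?thesis using q by (simp add: vertex_rows_def reduce_def p)
    next
      case False
      then have "p \<notin> P" by (simp add: p path_iff_chain)
      moreover have "M \<in> EM" using M by (simp add: der_lifts_def)
      ultimately show ?thesis by (simp add: vertex_rows_def reduce_def ad_def endo_mats_zero)
    qed
  qed (auto simp: vertex_rows_def reduce_def)
  ultimately show ?thesis by blast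
qed

definition normalized_der :: "(('v,'a) path \<Rightarrow> ('v,'a) path \<Rightarrow> 'k::field) \<Rightarrow> bool" where
  "normalized_der M \<longleftrightarrow> M \<in> Der \<and> reduce M = M \<and> vertex_rows M = (\<lambda>_ _. 0)"

lemma normalized_der_leibniz: "normalized_der M \<Longrightarrow> leibniz_mod_I M"
  by (simp add: normalized_der_def der_lift_leibniz)

lemma normalized_der_maps_ideal: "normalized_der M \<Longrightarrow> maps_ideal M"
  by (simp add: normalized_der_def der_lift_maps_ideal)

lemma normalized_der_endo: "normalized_der M \<Longrightarrow> M \<in> EM"
  by (simp add: normalized_der_def der_lifts_def)

lemma normalized_der_col: "normalized_der M \<Longrightarrow> r \<notin> B \<Longrightarrow> M p r = 0"
  unfolding normalized_der_def by (metis reduce_def)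

lemma normalized_der_vertex: "normalized_der M \<Longrightarrow> M (w, []) r = 0"
  unfolding normalized_der_def vertex_rows_def by (metis snd_conv)

lemma normalized_der_row: "normalized_der M \<Longrightarrow> p \<notin> P \<Longrightarrow> M p r = 0"
  using normalized_der_endo endo_mats_zero by blast

lemma leibniz_snoc:
  assumes L: "leibniz_mod_I M" and p: "(v, bs @ [b]) \<in> P" and r: "r \<in> B"
  shows "M (v, bs @ [b]) r =
     (\<Sum>q'\<in>P. if composable (v, bs) q' \<and> pcat (v, bs) q' = r then M (arrow_path b) q' else 0) +
     (\<Sum>p'\<in>P. if composable p' (arrow_path b) \<and> pcat p' (arrow_path b) = r then M (v, bs) p' else 0)"
proof -
  have p0: "(v, bs) \<in> P" and "(ptgt t (v, bs), [b]) \<in> P" using p append_in_paths_iff by blast+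
  then have b: "b \<in> Q1" and c: "composable (v, bs) (arrow_path b)"
    by (simp_all add: path_iff_chain arrow_path_def psrc_def)
  have "pcat (v, bs) (arrow_path b) = (v, bs @ [b])" by (simp add: pcat_def arrow_path_def)
  then show ?thesis
    using leibniz_mod_ID[OF L p0 arrow_path_in_paths[OF b] r] c by simp
qed

lemma normalized_der_parallel:
  assumes M: "normalized_der (M :: _ \<Rightarrow> _ \<Rightarrow> 'k::field)" and a: "a \<in> Q1"
    and ne: "M (arrow_path a) e \<noteq> 0"
  shows "e \<in> B" "psrc e = s a" "ptgt t e = t a"
proof -
  show eB: "e \<in> B" using normalized_der_col[OF M] ne by blast
  have eP: "e \<in> P" using eB basis_in_paths by blast
  have L: "leibniz_mod_I M" by (rule normalized_der_leibniz[OF M])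
  have sa: "(s a, []) \<in> P" "(t a, []) \<in> P" using vertex_path arrow_ends_in_Q0 a by auto
  have aP: "arrow_path a \<in> P" using arrow_path_in_paths a by blast
  have "(if composable (s a, []) (arrow_path a) then M (pcat (s a, []) (arrow_path a)) e else 0)
    = (if psrc e = s a then M (arrow_path a) e else 0) +
      (\<Sum>p'\<in>P. if composable p' (arrow_path a) \<and> pcat p' (arrow_path a) = e then M (s a, []) p' else 0)"
    using leibniz_mod_ID[OF L sa(1) aP eB] by (simp only: sum_vertex_left[OF eP])
  then have "M (arrow_path a) e = (if psrc e = s a then M (arrow_path a) e else 0)"
    by (simp add: normalized_der_vertex[OF M] arrow_path_def ptgt_def psrc_def pcat_def cong: if_cong)
  then show "psrc e = s a" using ne by metis
  have "(if composable (arrow_path a) (t a, []) then M (pcat (arrow_path a) (t a, [])) e else 0)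
    = (\<Sum>q'\<in>P. if composable (arrow_path a) q' \<and> pcat (arrow_path a) q' = e then M (t a, []) q' else 0)
      + (if ptgt t e = t a then M (arrow_path a) e else 0)"
    using leibniz_mod_ID[OF L aP sa(2) eB] by (simp only: sum_vertex_right[OF eP])
  then have "M (arrow_path a) e = (if ptgt t e = t a then M (arrow_path a) e else 0)"
    by (simp add: normalized_der_vertex[OF M] arrow_path_def ptgt_def psrc_def pcat_def cong: if_cong)
  then show "ptgt t e = t a" using ne by metis
qed

lemma arrow_parallel_path_nonempty:
  "a \<in> Q1 \<Longrightarrow> psrc e = s a \<Longrightarrow> ptgt t e = t a \<Longrightarrow> snd e \<noteq> []"
  using arrow_not_loop by (auto simp: ptgt_def psrc_def)

text \<open>The value of a normalized derivation on an arrow a at a parallel path e reappears at every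
  path through a, in the column of the path obtained by replacing a with e.\<close>

lemma normalized_der_replace_base:
  assumes M: "normalized_der (M :: _ \<Rightarrow> _ \<Rightarrow> 'k::field)" and a: "a \<in> Q1" and eP: "e \<in> P"
    and es: "psrc e = s a" and et: "ptgt t e = t a" and last: "last (snd e) \<noteq> a"
    and p: "(v, xs @ [a]) \<in> P" and r: "(v, xs @ snd e) \<in> B"
  shows "M (v, xs @ [a]) (v, xs @ snd e) = M (arrow_path a) e"
proof -
  have ene: "snd e \<noteq> []" by (rule arrow_parallel_path_nonempty[OF a es et])
  have c0: "ptgt t (v, xs) = s a"
    using p append_in_paths_iff[of v xs "[a]"] by (simp add: path_iff_chain)
  have "composable (v, xs) q' \<and> pcat (v, xs) q' = (v, xs @ snd e) \<longleftrightarrow> q' = e" for q'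
    using c0 es by (cases q', cases e) (auto simp: pcat_def psrc_def)
  then have "(\<Sum>q'\<in>P. if composable (v, xs) q' \<and> pcat (v, xs) q' = (v, xs @ snd e)
      then M (arrow_path a) q' else 0) = (\<Sum>q'\<in>P. if q' = e then M (arrow_path a) e else 0)"
    by (intro sum.cong) auto
  also have "\<dots> = M (arrow_path a) e" using eP by (simp add: finite_paths)
  finally have first: "(\<Sum>q'\<in>P. if composable (v, xs) q' \<and> pcat (v, xs) q' = (v, xs @ snd e)
      then M (arrow_path a) q' else 0) = M (arrow_path a) e" .
  have "pcat p' (arrow_path a) \<noteq> (v, xs @ snd e)" for p'
  proof
    assume "pcat p' (arrow_path a) = (v, xs @ snd e)"
    then have "last (snd p' @ [a]) = last (xs @ snd e)" by (simp add: pcat_def arrow_path_def)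
    then show False using last ene by simp
  qed
  then show ?thesis
    using leibniz_snoc[OF normalized_der_leibniz[OF M] p r] first by simp
qed

lemma normalized_der_replace_snoc:
  assumes M: "normalized_der (M :: _ \<Rightarrow> _ \<Rightarrow> 'k::field)"
    and hd: "hd (snd e) \<noteq> a" and ene: "snd e \<noteq> []"
    and p: "(v, xs @ a # ys @ [b]) \<in> P" and r: "(v, xs @ snd e @ ys @ [b]) \<in> B"
  shows "M (v, xs @ a # ys @ [b]) (v, xs @ snd e @ ys @ [b]) = M (v, xs @ a # ys) (v, xs @ snd e @ ys)"
proof -
  let ?pa = "(v, xs @ a # ys)" and ?ra = "(v, xs @ snd e @ ys)"
  have rB: "(v, (xs @ snd e @ ys) @ [b]) \<in> B" using r by simp
  then have raB: "?ra \<in> B" and rbB: "(ptgt t ?ra, [b]) \<in> B" using basis_append_split by blast+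
  have cr: "composable ?ra (arrow_path b)"
    using basis_in_paths[OF rbB] by (simp add: path_iff_chain arrow_path_def psrc_def)
  have first: "(\<Sum>q'\<in>P. if composable ?pa q' \<and> pcat ?pa q' = (v, xs @ snd e @ ys @ [b])
      then M (arrow_path b) q' else 0) = 0"
  proof (intro sum.neutral ballI)
    fix q' assume "q' \<in> P"
    show "(if composable ?pa q' \<and> pcat ?pa q' = (v, xs @ snd e @ ys @ [b])
        then M (arrow_path b) q' else 0) = 0"
    proof (cases "M (arrow_path b) q' = 0")
      case False
      have b: "b \<in> Q1"
        using p append_in_paths_iff[of v "xs @ a # ys" "[b]"] by (simp add: path_iff_chain)
      have "snd q' \<noteq> []"
        using normalized_der_parallel[OF M b False] arrow_parallel_path_nonempty[OF b] by blast
      then have "pcat ?pa q' \<noteq> (v, xs @ snd e @ ys @ [b])"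
        using hd ene by (auto simp: pcat_def dest!: arg_cong[of _ _ hd])
      then show ?thesis by simp
    qed simp
  qed
  have "composable p' (arrow_path b) \<and> pcat p' (arrow_path b) = (v, xs @ snd e @ ys @ [b])
      \<longleftrightarrow> p' = ?ra" for p'
    using cr by (cases p') (auto simp: pcat_def arrow_path_def)
  then have "(\<Sum>p'\<in>P. if composable p' (arrow_path b) \<and> pcat p' (arrow_path b) = (v, xs @ snd e @ ys @ [b])
      then M ?pa p' else 0) = (\<Sum>p'\<in>P. if p' = ?ra then M ?pa ?ra else 0)"
    by (intro sum.cong) auto
  also have "\<dots> = M ?pa ?ra" using raB basis_in_paths by (simp add: finite_paths)
  finally show ?thesis
    using leibniz_snoc[OF normalized_der_leibniz[OF M], of v "xs @ a # ys" b] p r first by simp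
qed

lemma normalized_der_replace:
  assumes M: "normalized_der (M :: _ \<Rightarrow> _ \<Rightarrow> 'k::field)" and a: "a \<in> Q1" and eP: "e \<in> P"
    and es: "psrc e = s a" and et: "ptgt t e = t a" and ng: "\<not> glued s t a e"
    and p: "(v, xs @ a # ys) \<in> P" and r: "(v, xs @ snd e @ ys) \<in> B"
  shows "M (v, xs @ a # ys) (v, xs @ snd e @ ys) = M (arrow_path a) e"
proof -
  have ene: "snd e \<noteq> []" by (rule arrow_parallel_path_nonempty[OF a es et])
  then have hd: "hd (snd e) \<noteq> a" and last: "last (snd e) \<noteq> a" using ng by (auto simp: glued_def)
  from p r show ?thesis
  proof (induction ys rule: rev_induct)
    case Nil
    then show ?case using normalized_der_replace_base[OF M a eP es et last] by simp
  next
    case (snoc b ys)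
    moreover have "(v, xs @ a # ys) \<in> P" "(v, xs @ snd e @ ys) \<in> B"
      using snoc.prems append_in_paths_iff[of v "xs @ a # ys" "[b]"]
        basis_append_split[of v "xs @ snd e @ ys" "[b]"] by simp_all
    ultimately show ?case using normalized_der_replace_snoc[OF M hd ene] by simp
  qed
qed

text \<open>At an effective pair the relation through a lies outside B while its replacement lies in B,
  and a derivation lift maps I to I.\<close>

lemma normalized_der_effective:
  assumes M: "normalized_der (M :: _ \<Rightarrow> _ \<Rightarrow> 'k::field)"
    and pp: "(a, e) \<in> parallel_pairs Q0 Q1 s t B" and ef: "effective Q0 Q1 s t Z a e"
  shows "M (arrow_path a) e = 0"
proof -
  have a: "a \<in> Q1" and eB: "e \<in> B" and es: "psrc e = s a" and et: "ptgt t e = t a"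
    using pp by (auto simp: parallel_pairs_def)
  obtain g xs ys where g: "g \<in> Z" "snd g = xs @ a # ys" and rB: "(fst g, xs @ snd e @ ys) \<in> B"
    and ng: "\<not> glued s t a e"
    using ef unfolding effective_def by blast
  have gP: "(fst g, xs @ a # ys) \<in> P" and gB: "(fst g, xs @ a # ys) \<notin> B"
    using relation_in_paths[OF g(1)] relation_not_in_basis[OF g(1)] g(2) by (metis prod.collapse)+
  then show ?thesis
    using normalized_der_replace[OF M a basis_in_paths[OF eB] es et ng gP rB] rB
      normalized_der_maps_ideal[OF M] unfolding maps_ideal_def by metis
qed

lemma normalized_der_eq_0:
  assumes M: "normalized_der (M :: _ \<Rightarrow> _ \<Rightarrow> 'k::field)" and z: "\<And>a e. M (arrow_path a) e = 0"
  shows "M = (\<lambda>_ _. 0)"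
proof (intro ext)
  fix p r :: "('v,'a) path"
  have "M (v, as) r = 0" for v as
  proof (induction as arbitrary: r rule: rev_induct)
    case Nil
    then show ?case by (rule normalized_der_vertex[OF M])
  next
    case (snoc b bs)
    show ?case
    proof (cases "(v, bs @ [b]) \<in> P \<and> r \<in> B")
      case True
      then show ?thesis
        using leibniz_snoc[OF normalized_der_leibniz[OF M]] by (simp add: z snoc.IH cong: if_cong)
    next
      case False
      then show ?thesis using normalized_der_row[OF M] normalized_der_col[OF M] by blast
    qed
  qed
  then show "M p r = 0" by (metis prod.collapse)
qed

section \<open>Derivations from non-effective pairs\<close>

definition replaces :: "'a \<Rightarrow> ('v,'a) path \<Rightarrow> ('v,'a) path \<Rightarrow> ('v,'a) path \<Rightarrow> bool" where
  "replaces a e p r \<longleftrightarrow> (\<exists>xs ys. snd p = xs @ a # ys \<and> r = (fst p, xs @ snd e @ ys))"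

lemma replaces_pcat:
  "replaces a e (pcat p q) r \<longleftrightarrow>
     (\<exists>p'. replaces a e p p' \<and> r = pcat p' q) \<or> (\<exists>q'. replaces a e q q' \<and> r = pcat p q')"
proof
  assume "replaces a e (pcat p q) r"
  then obtain xs ys where xy: "snd p @ snd q = xs @ a # ys" "r = (fst p, xs @ snd e @ ys)"
    by (auto simp: replaces_def pcat_def)
  from split_at_elem[OF xy(1)] show
    "(\<exists>p'. replaces a e p p' \<and> r = pcat p' q) \<or> (\<exists>q'. replaces a e q q' \<and> r = pcat p q')"
  proof (elim disjE exE conjE)
    fix zs assume "snd p = xs @ a # zs" "ys = zs @ snd q"
    then show ?thesis using xy(2)
      by (intro disjI1 exI[of _ "(fst p, xs @ snd e @ zs)"]) (auto simp: replaces_def pcat_def)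
  next
    fix zs assume "snd q = zs @ a # ys" "xs = snd p @ zs"
    then show ?thesis using xy(2)
      by (intro disjI2 exI[of _ "(fst q, zs @ snd e @ ys)"]) (auto simp: replaces_def pcat_def)
  qed
next
  assume "(\<exists>p'. replaces a e p p' \<and> r = pcat p' q) \<or> (\<exists>q'. replaces a e q q' \<and> r = pcat p q')"
  then show "replaces a e (pcat p q) r"
  proof (elim disjE exE conjE)
    fix p' assume "replaces a e p p'" "r = pcat p' q"
    then obtain xs ys where "snd p = xs @ a # ys" "r = (fst p, xs @ snd e @ ys @ snd q)"
      by (auto simp: replaces_def pcat_def)
    then show ?thesis unfolding replaces_def pcat_def by (intro exI[of _ xs] exI[of _ "ys @ snd q"]) simp
  next
    fix q' assume "replaces a e q q'" "r = pcat p q'"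
    then obtain xs ys where "snd q = xs @ a # ys" "r = (fst p, snd p @ xs @ snd e @ ys)"
      by (auto simp: replaces_def pcat_def)
    then show ?thesis unfolding replaces_def pcat_def by (intro exI[of _ "snd p @ xs"] exI[of _ ys]) simp
  qed
qed

context
  fixes a e
  assumes ne: "(a, e) \<in> non_effective Q0 Q1 s t Z"
begin

lemma non_effective_D: "a \<in> Q1" "e \<in> B" "psrc e = s a" "ptgt t e = t a"
  "\<not> effective Q0 Q1 s t Z a e"
  using ne by (auto simp: non_effective_def parallel_pairs_def)

lemma non_effective_glued: "glued s t a e \<Longrightarrow> snd e = [a]"
proof -
  have eP: "e \<in> P" using basis_in_paths non_effective_D(2) by blast
  assume "glued s t a e"
  then consider rest where "snd e = a # rest" | rest where "snd e = rest @ [a]" | "s a = t a"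
    unfolding glued_def by (metis append_butlast_last_id list.collapse)
  then show "snd e = [a]"
    using parallel_path_hd[OF eP non_effective_D(3,4)] parallel_path_last[OF eP non_effective_D(3,4)]
      arrow_not_loop[OF non_effective_D(1)] by cases auto
qed

lemma replace_in_paths:
  assumes "(v, xs @ a # ys) \<in> P"
  shows "(v, xs @ snd e @ ys) \<in> P" "ptgt t (v, xs @ snd e @ ys) = ptgt t (v, xs @ a # ys)"
proof -
  have eP: "e \<in> P" using basis_in_paths non_effective_D(2) by blast
  have ene: "snd e \<noteq> []"
    by (rule arrow_parallel_path_nonempty[OF non_effective_D(1,3,4)])
  have h: "(v, xs) \<in> P" "(ptgt t (v, xs), [a] @ ys) \<in> P" using assms append_in_paths_iff by auto
  then have sa: "ptgt t (v, xs) = s a" by (simp add: path_iff_chain)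
  have "(t a, ys) \<in> P" using h(2) append_in_paths_iff[of _ "[a]" ys] by (simp add: ptgt_def)
  moreover have "(ptgt t (v, xs), snd e) \<in> P" using eP sa non_effective_D(3)
    by (metis prod.collapse psrc_def)
  moreover have "ptgt t (ptgt t (v, xs), snd e) = t a"
    using non_effective_D(4) ene by (simp add: ptgt_def)
  ultimately show "(v, xs @ snd e @ ys) \<in> P" using h(1) append_in_paths_iff by simp
  show "ptgt t (v, xs @ snd e @ ys) = ptgt t (v, xs @ a # ys)"
    using non_effective_D(4) ene by (cases "ys = []") (auto simp: ptgt_def)
qed

text \<open>Non-effectiveness is exactly what makes replacing a by e preserve the complement of B:
  if the relation inside p contains a, then the replaced relation is again outside B.\<close>

lemma replace_outside_basis:
  assumes p: "p \<in> P" "p \<notin> B" and sp: "snd p = xs @ a # ys"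
  shows "(fst p, xs @ snd e @ ys) \<notin> B"
proof -
  have notB: "(v, u @ snd z @ w) \<notin> B" if "z \<in> Z" for v u w z
    using that basis_iff by auto
  obtain z u w where z: "z \<in> Z" "snd p = u @ snd z @ w" using p basis_iff by blast
  have "xs @ a # ys = u @ snd z @ w" using sp z by simp
  from split_at_elem3[OF this] show ?thesis
  proof (elim disjE exE conjE)
    fix u' assume "u = xs @ a # u'" "ys = u' @ snd z @ w"
    then show ?thesis using notB[OF z(1), of _ "xs @ snd e @ u'"] by simp
  next
    fix w' assume "w = w' @ a # ys" "xs = u @ snd z @ w'"
    then show ?thesis using notB[OF z(1), of _ u] by simp
  next
    fix z1 z2 assume zz: "snd z = z1 @ a # z2" "xs = u @ z1" "ys = z2 @ w"
    show ?thesis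
    proof (cases "glued s t a e")
      case True
      then show ?thesis using non_effective_glued notB[OF z(1)] zz by simp
    next
      case False
      then have "(fst z, z1 @ snd e @ z2) \<notin> B"
        using non_effective_D(5) z(1) zz(1) unfolding effective_def by blast
      moreover have "(fst z, z1 @ snd e @ z2) \<in> P"
        using replace_in_paths relation_in_paths[OF z(1)] zz(1) by (metis prod.collapse)
      ultimately obtain z' u' w' where z': "z' \<in> Z" "z1 @ snd e @ z2 = u' @ snd z' @ w'"
        using basis_iff by auto
      then have "xs @ snd e @ ys = (u @ u') @ snd z' @ (w' @ w)" using zz by simp
      then show ?thesis using notB[OF z'(1)] by metis
    qed
  qed
qed

lemma replaces_in_paths: "replaces a e p r \<Longrightarrow> p \<in> P \<Longrightarrow> r \<in> P \<and> ptgt t r = ptgt t p"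
  unfolding replaces_def using replace_in_paths by (metis prod.collapse)

lemma replaces_basis: "replaces a e p r \<Longrightarrow> p \<in> P \<Longrightarrow> r \<in> B \<Longrightarrow> p \<in> B"
  unfolding replaces_def using replace_outside_basis by blast

definition replacement_der :: "('v,'a) path \<Rightarrow> ('v,'a) path \<Rightarrow> 'k::field" where
  "replacement_der = (\<lambda>p r. if p \<in> P \<and> r \<in> B \<and> replaces a e p r then 1 else 0)"

lemma replacement_der_sum_right:
  assumes p: "p \<in> P" and q: "q \<in> P" and r: "r \<in> B"
  shows "(\<Sum>q'\<in>P. if composable p q' \<and> pcat p q' = r then (replacement_der q q' :: 'k::field) else 0)
    = (if \<exists>q'\<in>P. composable p q' \<and> pcat p q' = r \<and> replaces a e q q' then 1 else 0)"
proof -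
  have "(\<Sum>q'\<in>P. if composable p q' \<and> pcat p q' = r then (replacement_der q q' :: 'k) else 0)
      = (\<Sum>q'\<in>P. if composable p q' \<and> pcat p q' = r \<and> replaces a e q q' then 1 else 0)"
    using pcat_in_basis_factors[OF p _ _] r q by (intro sum.cong) (auto simp: replacement_der_def)
  also have "\<dots> = (if \<exists>q'\<in>P. composable p q' \<and> pcat p q' = r \<and> replaces a e q q' then 1 else 0)"
  proof (rule sum_indicator_unique[OF finite_paths])
    fix y y' assume "composable p y \<and> pcat p y = r \<and> replaces a e q y"
      "composable p y' \<and> pcat p y' = r \<and> replaces a e q y'"
    then have "snd y = snd y'" "fst y = fst y'" by (auto simp: pcat_def replaces_def)
    then show "y = y'" by (simp add: prod_eq_iff)
  qed
  finally show ?thesis .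
qed

lemma replacement_der_sum_left:
  assumes p: "p \<in> P" and q: "q \<in> P" and r: "r \<in> B"
  shows "(\<Sum>p'\<in>P. if composable p' q \<and> pcat p' q = r then (replacement_der p p' :: 'k::field) else 0)
    = (if \<exists>p'\<in>P. composable p' q \<and> pcat p' q = r \<and> replaces a e p p' then 1 else 0)"
proof -
  have "(\<Sum>p'\<in>P. if composable p' q \<and> pcat p' q = r then (replacement_der p p' :: 'k) else 0)
      = (\<Sum>p'\<in>P. if composable p' q \<and> pcat p' q = r \<and> replaces a e p p' then 1 else 0)"
    using pcat_in_basis_factors[OF _ q] r p by (intro sum.cong) (auto simp: replacement_der_def)
  also have "\<dots> = (if \<exists>p'\<in>P. composable p' q \<and> pcat p' q = r \<and> replaces a e p p' then 1 else 0)"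
  proof (rule sum_indicator_unique[OF finite_paths])
    fix y y' assume "composable y q \<and> pcat y q = r \<and> replaces a e p y"
      "composable y' q \<and> pcat y' q = r \<and> replaces a e p y'"
    then have "snd y @ snd q = snd y' @ snd q" "fst y = fst y'" by (auto simp: pcat_def)
    then show "y = y'" by (simp add: prod_eq_iff)
  qed
  finally show ?thesis .
qed

text \<open>The occurrence of a in pq lies either in p or in q, and not in both since paths do not
  repeat arrows.\<close>

lemma replacement_der_leibniz: "leibniz_mod_I (replacement_der :: _ \<Rightarrow> _ \<Rightarrow> 'k::field)"
  unfolding leibniz_mod_I_def
proof (intro ballI)
  fix p q r assume p: "p \<in> P" and q: "q \<in> P" and r: "r \<in> B"
  define S1 where "S1 \<longleftrightarrow> (\<exists>q'\<in>P. composable p q' \<and> pcat p q' = r \<and> replaces a e q q')"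
  define S2 where "S2 \<longleftrightarrow> (\<exists>p'\<in>P. composable p' q \<and> pcat p' q = r \<and> replaces a e p p')"
  note R = replacement_der_sum_right[OF p q r, folded S1_def, where 'k = 'k]
    replacement_der_sum_left[OF p q r, folded S2_def, where 'k = 'k]
  show "(if composable p q then (replacement_der (pcat p q) r :: 'k) else 0) =
     (\<Sum>q'\<in>P. if composable p q' \<and> pcat p q' = r then replacement_der q q' else 0) +
     (\<Sum>p'\<in>P. if composable p' q \<and> pcat p' q = r then replacement_der p p' else 0)"
  proof (cases "composable p q")
    case False
    have "\<not> S1" using False by (auto simp: S1_def replaces_def psrc_def)
    moreover have "\<not> S2"
    proof
      assume S2
      then obtain p' where "composable p' q" "replaces a e p p'" unfolding S2_def by blast
      then show False using False replaces_in_paths[of p p'] p by simp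
    qed
    ultimately show ?thesis unfolding R using False by simp
  next
    case True
    have pq: "pcat p q \<in> P" using pcat_in_paths p q True by blast
    have "\<not> (S1 \<and> S2)"
    proof
      assume "S1 \<and> S2"
      then have "a \<in> set (snd q)" "a \<in> set (snd p)" by (auto simp: S1_def S2_def replaces_def)
      then show False using distinct_path[of "fst p" "snd p @ snd q"] pq by (auto simp: pcat_def)
    qed
    moreover have "replaces a e (pcat p q) r \<longleftrightarrow> S1 \<or> S2"
    proof -
      have "replaces a e q q' \<Longrightarrow> q' \<in> P \<and> composable p q'" for q'
        using replaces_in_paths[of q q'] q True by (auto simp: replaces_def psrc_def)
      moreover have "replaces a e p p' \<Longrightarrow> p' \<in> P \<and> composable p' q" for p'
        using replaces_in_paths[of p p'] p True by simp
      ultimately show ?thesis unfolding replaces_pcat S1_def S2_def by blast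
    qed
    ultimately show ?thesis unfolding R using True pq r by (auto simp: replacement_der_def)
  qed
qed

lemma replacement_der_normalized: "normalized_der (replacement_der :: _ \<Rightarrow> _ \<Rightarrow> 'k::field)"
proof -
  have "replacement_der \<in> (Der :: (_ \<Rightarrow> _ \<Rightarrow> 'k) set)"
  proof (rule der_liftsI)
    show "replacement_der \<in> EM"
      using basis_in_paths by (auto simp: replacement_der_def endo_mats_def)
    show "maps_ideal replacement_der"
      using replaces_basis by (auto simp: maps_ideal_def replacement_der_def)
  qed (rule replacement_der_leibniz)
  then show ?thesis
    by (auto simp: normalized_der_def reduce_def vertex_rows_def replacement_der_def replaces_def fun_eq_iff)
qed

lemma replacement_der_arrow:
  "(replacement_der (arrow_path a') e' :: 'k::field) = (if a' = a \<and> e' = e then 1 else 0)"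
proof -
  have "replaces a e (arrow_path a') e' \<longleftrightarrow> a' = a \<and> e' = e"
    using non_effective_D(3)
    by (auto simp: replaces_def arrow_path_def psrc_def Cons_eq_append_conv prod_eq_iff)
  then show ?thesis
    using arrow_path_in_paths[OF non_effective_D(1)] non_effective_D(2)
    by (auto simp: replacement_der_def)
qed

end

section \<open>Counting dimensions\<close>

abbreviation NE :: "('a \<times> ('v,'a) path) set" where "NE \<equiv> non_effective Q0 Q1 s t Z"

definition arrow_values :: "(('v,'a) path \<Rightarrow> ('v,'a) path \<Rightarrow> 'k::field) \<Rightarrow> ('a \<times> ('v,'a) path \<Rightarrow> 'k)" where
  "arrow_values M = (\<lambda>(a, e). M (arrow_path a) e)"

definition reduced_ad :: "(('v,'a) path \<Rightarrow> 'k::field) \<Rightarrow> (('v,'a) path \<Rightarrow> ('v,'a) path \<Rightarrow> 'k)" where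
  "reduced_ad c = reduce (ad c)"

definition vertex_set :: "('v,'a) path set" where
  "vertex_set = (\<lambda>v. (v, [])) ` Q0"

definition unit_kQ :: "('v,'a) path \<Rightarrow> 'k::field" where
  "unit_kQ = (\<lambda>x. if x \<in> vertex_set then 1 else 0)"

lemma endo_mats_subset_span: "EM \<subseteq> mat_vs.span (mat_unit ` (P \<times> P) :: (_ \<Rightarrow> _ \<Rightarrow> 'k::field) set)"
  using supported_mats_subset_span[of "P \<times> P"] finite_paths by (auto simp: endo_mats_def)

lemma linear_reduce:
  "Vector_Spaces.linear (mat_scale :: 'k::field \<Rightarrow> _) mat_scale (reduce :: _ \<Rightarrow> _ \<Rightarrow> _ \<Rightarrow> 'k)"
  unfolding Vector_Spaces.linear_iff using vector_space_mat_scale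
  by (auto simp: reduce_def mat_scale_def fun_eq_iff)

lemma linear_vertex_rows:
  "Vector_Spaces.linear (mat_scale :: 'k::field \<Rightarrow> _) mat_scale (vertex_rows :: _ \<Rightarrow> _ \<Rightarrow> _ \<Rightarrow> 'k)"
  unfolding Vector_Spaces.linear_iff using vector_space_mat_scale
  by (auto simp: vertex_rows_def mat_scale_def fun_eq_iff)

lemma linear_arrow_values:
  "Vector_Spaces.linear (mat_scale :: 'k::field \<Rightarrow> _) fscale (arrow_values :: _ \<Rightarrow> _ \<Rightarrow> 'k)"
  unfolding Vector_Spaces.linear_iff using vector_space_mat_scale vector_space_fscale
  by (auto simp: arrow_values_def mat_scale_def fscale_def fun_eq_iff)

lemma linear_reduced_ad:
  "Vector_Spaces.linear (fscale :: 'k::field \<Rightarrow> _) mat_scale (reduced_ad :: _ \<Rightarrow> _ \<Rightarrow> _ \<Rightarrow> 'k)"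
  unfolding Vector_Spaces.linear_iff using vector_space_mat_scale vector_space_fscale
  by (auto simp: reduced_ad_def ad_add ad_scale reduce_def mat_scale_def fun_eq_iff)

lemma leibniz_mod_I_add:
  assumes "leibniz_mod_I M1" "leibniz_mod_I M2"
  shows "leibniz_mod_I (M1 + M2 :: _ \<Rightarrow> _ \<Rightarrow> 'k::field)"
  unfolding leibniz_mod_I_def
proof (intro ballI)
  fix p q r assume h: "p \<in> P" "q \<in> P" "r \<in> B"
  have if_add: "(if c then x + y else 0) = (if c then x else 0) + (if c then y else (0::'k))" for c x y
    by simp
  show "(if composable p q then (M1 + M2) (pcat p q) r else 0) =
     (\<Sum>q'\<in>P. if composable p q' \<and> pcat p q' = r then (M1 + M2) q q' else 0) +
     (\<Sum>p'\<in>P. if composable p' q \<and> pcat p' q = r then (M1 + M2) p p' else 0)"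
    unfolding plus_fun_apply if_add sum.distrib leibniz_mod_ID[OF assms(1) h] leibniz_mod_ID[OF assms(2) h]
    by (simp only: ac_simps)
qed

lemma leibniz_mod_I_scale:
  assumes "leibniz_mod_I M"
  shows "leibniz_mod_I (mat_scale k M :: _ \<Rightarrow> _ \<Rightarrow> 'k::field)"
  unfolding leibniz_mod_I_def
proof (intro ballI)
  fix p q r assume h: "p \<in> P" "q \<in> P" "r \<in> B"
  have if_mult: "(if c then k * x else 0) = k * (if c then x else (0::'k))" for c x
    by simp
  show "(if composable p q then mat_scale k M (pcat p q) r else 0) =
     (\<Sum>q'\<in>P. if composable p q' \<and> pcat p q' = r then mat_scale k M q q' else 0) +
     (\<Sum>p'\<in>P. if composable p' q \<and> pcat p' q = r then mat_scale k M p p' else 0)"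
    unfolding mat_scale_def if_mult sum_distrib_left[symmetric] leibniz_mod_ID[OF assms h]
    by (simp only: distrib_left)
qed

lemma subspace_der_lifts: "mat_vs.subspace (Der :: (_ \<Rightarrow> _ \<Rightarrow> 'k::field) set)"
proof -
  have "leibniz_mod_I (0 :: _ \<Rightarrow> _ \<Rightarrow> 'k)" by (simp add: leibniz_mod_I_def cong: if_cong)
  then show ?thesis
    unfolding der_lifts_eq mat_vs.subspace_def
    using leibniz_mod_I_add leibniz_mod_I_scale
    by (auto simp: endo_mats_def maps_ideal_def mat_scale_def)
qed

lemma subspace_inn_lifts: "mat_vs.subspace (Inn :: (_ \<Rightarrow> _ \<Rightarrow> 'k::field) set)"
  unfolding inn_lifts_eq mat_vs.subspace_def
proof (intro conjI ballI allI)
  have "(\<lambda>_. 0 :: 'k) \<in> kQ" by (simp add: pathalg_def)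
  moreover have "reduce 0 = reduce (ad (\<lambda>_. 0 :: 'k))" by (simp add: ad_zero reduce_def fun_eq_iff)
  moreover have "0 \<in> EM" by (simp add: endo_mats_def)
  ultimately show "0 \<in> {M \<in> EM. \<exists>c\<in>kQ. reduce M = reduce (ad (c :: _ \<Rightarrow> 'k))}" by blast
next
  fix x y :: "_ \<Rightarrow> _ \<Rightarrow> 'k"
  assume "x \<in> {M \<in> EM. \<exists>c\<in>kQ. reduce M = reduce (ad c)}" "y \<in> {M \<in> EM. \<exists>c\<in>kQ. reduce M = reduce (ad c)}"
  then obtain c1 c2 where xy: "x \<in> EM" "y \<in> EM" and c: "c1 \<in> kQ" "c2 \<in> kQ"
    "reduce x = reduce (ad c1)" "reduce y = reduce (ad c2)" by blast
  have "c1 + c2 \<in> kQ" using c by (simp add: pathalg_def)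
  moreover have "reduce (x + y) = reduce (ad (c1 + c2))"
    using c unfolding ad_add by (simp add: reduce_def fun_eq_iff) metis
  ultimately show "x + y \<in> {M \<in> EM. \<exists>c\<in>kQ. reduce M = reduce (ad c)}"
    using xy by (auto simp: endo_mats_def)
next
  fix k and x :: "_ \<Rightarrow> _ \<Rightarrow> 'k"
  assume "x \<in> {M \<in> EM. \<exists>c\<in>kQ. reduce M = reduce (ad c)}"
  then obtain c where x: "x \<in> EM" and c: "c \<in> kQ" "reduce x = reduce (ad c)" by blast
  have "fscale k c \<in> kQ" using c by (simp add: pathalg_def fscale_def)
  moreover have "reduce (mat_scale k x) = reduce (ad (fscale k c))"
    using c unfolding ad_scale by (simp add: reduce_def fun_eq_iff mat_scale_def) metis
  ultimately show "mat_scale k x \<in> {M \<in> EM. \<exists>c\<in>kQ. reduce M = reduce (ad c)}"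
    using x by (auto simp: endo_mats_def mat_scale_def)
qed

lemma leibniz_mod_I_zero: "leibniz_mod_I (\<lambda>_ _. 0 :: 'k::field)"
  by (simp add: leibniz_mod_I_def cong: if_cong)

text \<open>Maps into I are both derivation lifts and lifts of the zero inner derivation.\<close>

lemma der_lifts_kernel_eq:
  "(Der :: (_ \<Rightarrow> _ \<Rightarrow> 'k::field) set) \<inter> {M. reduce M = 0} = Inn \<inter> {M. reduce M = 0}"
proof -
  have zero_on_B: "M p r = 0" if "reduce M = 0" "r \<in> B" for M :: "_ \<Rightarrow> _ \<Rightarrow> 'k" and p r
    using that by (metis reduce_def zero_fun_apply)
  have "M \<in> Der" if M: "M \<in> EM" "reduce M = 0" for M :: "_ \<Rightarrow> _ \<Rightarrow> 'k"
  proof (rule der_liftsI[OF M(1)])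
    show "maps_ideal M" unfolding maps_ideal_def using zero_on_B[OF M(2)] by blast
    show "leibniz_mod_I M"
      using leibniz_mod_I_cong[of M "\<lambda>_ _. 0"] leibniz_mod_I_zero zero_on_B[OF M(2)] by blast
  qed
  moreover have "M \<in> Inn" if M: "M \<in> EM" "reduce M = 0" for M :: "_ \<Rightarrow> _ \<Rightarrow> 'k"
  proof -
    have "reduce M = reduce (ad (\<lambda>_. 0 :: 'k))" using M by (simp add: ad_zero reduce_def fun_eq_iff)
    moreover have "(\<lambda>_. 0 :: 'k) \<in> kQ" by (simp add: pathalg_def)
    ultimately show ?thesis unfolding inn_lifts_eq using M by blast
  qed
  moreover have "Der \<subseteq> (EM :: (_ \<Rightarrow> _ \<Rightarrow> 'k) set)" "Inn \<subseteq> (EM :: (_ \<Rightarrow> _ \<Rightarrow> 'k) set)"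
    unfolding der_lifts_def inn_lifts_def by blast+
  ultimately show ?thesis by blast
qed

lemma reduced_der_vertex_kernel:
  "reduce ` (Der :: (_ \<Rightarrow> _ \<Rightarrow> 'k::field) set) \<inter> {M. vertex_rows M = 0} = {M. normalized_der M}"
proof (intro set_eqI iffI)
  fix M :: "_ \<Rightarrow> _ \<Rightarrow> 'k" assume "M \<in> reduce ` Der \<inter> {M. vertex_rows M = 0}"
  then obtain N where N: "N \<in> Der" "M = reduce N" and vr: "vertex_rows M = 0" by blast
  have "M \<in> Der" using N reduce_der_lift by blast
  moreover have "reduce M = M" using N reduce_idem by metis
  moreover have "vertex_rows M = (\<lambda>_ _. 0)" using vr by (simp add: fun_eq_iff)
  ultimately show "M \<in> {M. normalized_der M}" by (simp add: normalized_der_def)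
next
  fix M :: "_ \<Rightarrow> _ \<Rightarrow> 'k" assume "M \<in> {M. normalized_der M}"
  then have "M \<in> Der" "M = reduce M" "vertex_rows M = 0"
    by (simp_all add: normalized_der_def fun_eq_iff)
  then show "M \<in> reduce ` Der \<inter> {M. vertex_rows M = 0}" by blast
qed

lemma vertex_rows_reduced_lifts_eq:
  "vertex_rows ` reduce ` (Der :: (_ \<Rightarrow> _ \<Rightarrow> 'k::field) set) = vertex_rows ` reduce ` Inn"
proof (intro subset_antisym subsetI)
  fix X :: "_ \<Rightarrow> _ \<Rightarrow> 'k" assume "X \<in> vertex_rows ` reduce ` Der"
  then obtain M where "M \<in> Der" "X = vertex_rows (reduce M)" by blast
  moreover obtain c where "c \<in> (kQ :: (_ \<Rightarrow> 'k) set)" "vertex_rows (reduce M) = vertex_rows (reduce (ad c))"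
    using der_lift_vertex_rows[OF \<open>M \<in> Der\<close>] by blast
  ultimately show "X \<in> vertex_rows ` reduce ` Inn" using ad_inn_lift by blast
next
  fix X :: "_ \<Rightarrow> _ \<Rightarrow> 'k" assume "X \<in> vertex_rows ` reduce ` Inn"
  then obtain N where "N \<in> Inn" "X = vertex_rows (reduce N)" by blast
  moreover obtain c :: "_ \<Rightarrow> 'k" where "reduce N = reduce (ad c)"
    using \<open>N \<in> Inn\<close> unfolding inn_lifts_eq by blast
  ultimately show "X \<in> vertex_rows ` reduce ` Der" using ad_der_lift by (metis image_eqI)
qed

lemma reduced_ad_cong:
  assumes "\<And>r. r \<in> B \<Longrightarrow> c1 r = c2 r"
  shows "reduced_ad c1 = reduced_ad (c2 :: _ \<Rightarrow> 'k::field)"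
proof (intro ext)
  fix p q
  show "reduced_ad c1 p q = reduced_ad c2 p q"
  proof (cases "p \<in> P \<and> q \<in> B")
    case True
    then have p: "p \<in> P" and q: "q \<in> B" by auto
    have "pm c1 (delta p) q = pm c2 (delta p) q" unfolding pmul_delta_right[OF p]
      by (rule sum.cong) (use pcat_in_basis_factors[OF _ p] q assms in auto)
    moreover have "pm (delta p) c1 q = pm (delta p) c2 q" unfolding pmul_delta_left[OF p]
      by (rule sum.cong) (use pcat_in_basis_factors[OF p] q assms in auto)
    ultimately show ?thesis using p q by (simp add: reduced_ad_def reduce_def ad_def)
  qed (auto simp: reduced_ad_def reduce_def ad_def)
qed

text \<open>The vertex rows of ad c at a basis path r are c r and -c r at the target and the source
  of r, which differ unless r is a vertex.\<close>

lemma vertex_rows_reduced_ad_eq_0_iff: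
  "vertex_rows (reduced_ad c) = 0 \<longleftrightarrow> (\<forall>r\<in>B. snd r \<noteq> [] \<longrightarrow> c r = (0::'k::field))"
proof
  assume vr: "vertex_rows (reduced_ad c) = 0"
  show "\<forall>r\<in>B. snd r \<noteq> [] \<longrightarrow> c r = 0"
  proof (intro ballI impI)
    fix r assume r: "r \<in> B" and "snd r \<noteq> []"
    then have "psrc r \<noteq> ptgt t r"
      using ptgt_neq_start[of "fst r" "snd r"] basis_in_paths by (auto simp: psrc_def)
    moreover have "vertex_rows (reduced_ad c) (ptgt t r, []) r = 0" using vr by simp
    ultimately show "c r = 0"
      using r ad_vertex[OF ptgt_in_Q0 basis_in_paths, OF basis_in_paths[OF r] r, of c]
      by (simp add: vertex_rows_def reduced_ad_def reduce_def)
  qed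
next
  assume c: "\<forall>r\<in>B. snd r \<noteq> [] \<longrightarrow> c r = 0"
  have "ad c (w, []) r = 0" if "w \<in> Q0" "r \<in> B" for w r
    using ad_vertex[OF that(1) basis_in_paths[OF that(2)], of c] c that(2)
    by (cases "snd r = []") (auto simp: ptgt_def psrc_def)
  moreover have "ad c (w, []) r = 0" if "w \<notin> Q0" for w r
    using that by (simp add: ad_def path_iff_chain)
  ultimately have "ad c (w, []) r = 0" if "r \<in> B" for w r using that by (cases "w \<in> Q0") auto
  then show "vertex_rows (reduced_ad c) = 0"
    by (auto simp: fun_eq_iff vertex_rows_def reduced_ad_def reduce_def)
qed

lemma vertex_set_subset_paths: "vertex_set \<subseteq> P"
  using vertex_path by (auto simp: vertex_set_def)

lemma finite_vertex_set: "finite vertex_set"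
  using finite_paths vertex_set_subset_paths finite_subset by blast

lemma card_vertex_set: "card vertex_set = card Q0"
  unfolding vertex_set_def by (rule card_image) (auto simp: inj_on_def)

lemma reduced_inn_vertex_kernel:
  "reduce ` (Inn :: (_ \<Rightarrow> _ \<Rightarrow> 'k::field) set) \<inter> {M. vertex_rows M = 0} = reduced_ad ` supp_funs vertex_set"
proof (intro subset_antisym subsetI)
  fix X :: "_ \<Rightarrow> _ \<Rightarrow> 'k" assume "X \<in> reduce ` Inn \<inter> {M. vertex_rows M = 0}"
  then obtain N c where N: "N \<in> Inn" "X = reduce N" "vertex_rows X = 0"
    and c: "c \<in> (kQ :: (_ \<Rightarrow> 'k) set)" "reduce N = reduce (ad c)"
    unfolding inn_lifts_eq by blast
  define c' where "c' x = (if snd x = [] then c x else 0)" for x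
  have "c x = 0" if "snd x = []" "x \<notin> vertex_set" for x
  proof -
    have "x \<notin> P" using that by (cases x) (auto simp: vertex_set_def path_iff_chain)
    then show ?thesis using c(1) unfolding pathalg_def by blast
  qed
  then have "c' \<in> supp_funs vertex_set" by (auto simp: supp_funs_def c'_def)
  moreover have "X = reduced_ad c'"
  proof -
    have "vertex_rows (reduced_ad c) = 0" using N c by (simp add: reduced_ad_def)
    then have "c r = c' r" if "r \<in> B" for r
      using that by (auto simp: vertex_rows_reduced_ad_eq_0_iff c'_def)
    then have "reduced_ad c = reduced_ad c'" by (rule reduced_ad_cong)
    then show ?thesis using N c by (simp add: reduced_ad_def)
  qed
  ultimately show "X \<in> reduced_ad ` supp_funs vertex_set" by blast
next
  fix X :: "_ \<Rightarrow> _ \<Rightarrow> 'k" assume "X \<in> reduced_ad ` supp_funs vertex_set"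
  then obtain c where c: "c \<in> supp_funs vertex_set" "X = reduced_ad c" by blast
  then have "c \<in> kQ" using vertex_set_subset_paths by (auto simp: supp_funs_def pathalg_def)
  moreover have "c r = 0" if "snd r \<noteq> []" for r
  proof -
    have "r \<notin> vertex_set" using that by (auto simp: vertex_set_def)
    then show ?thesis using c(1) unfolding supp_funs_def by blast
  qed
  then have "vertex_rows X = 0" using c(2) by (simp add: vertex_rows_reduced_ad_eq_0_iff)
  ultimately show "X \<in> reduce ` Inn \<inter> {M. vertex_rows M = 0}"
    using c ad_inn_lift by (auto simp: reduced_ad_def)
qed

lemma pmul_delta_self:
  assumes p: "p \<in> P"
  shows "pm c (delta p) p = c (psrc p, [])" "pm (delta p) c p = c (ptgt t p, [])"
proof -
  have "composable x p \<and> pcat x p = p \<longleftrightarrow> x = (psrc p, [])" for x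
    by (cases x, cases p) (auto simp: pcat_def ptgt_def psrc_def)
  then show "pm c (delta p) p = c (psrc p, [])"
    using vertex_path[of "psrc p"] p by (simp add: pmul_delta_right[OF p] finite_paths psrc_def path_iff_chain')
  have "composable p x \<and> pcat p x = p \<longleftrightarrow> x = (ptgt t p, [])" for x
    by (cases x, cases p) (auto simp: pcat_def ptgt_def psrc_def)
  then show "pm (delta p) c p = c (ptgt t p, [])"
    using vertex_path[OF ptgt_in_Q0[OF p]] by (simp add: pmul_delta_left[OF p] finite_paths)
qed

lemma reduced_ad_arrow:
  "a \<in> Q1 \<Longrightarrow> reduced_ad c (arrow_path a) (arrow_path a) = c (s a, []) - c (t a, [])"
  using pmul_delta_self[OF arrow_path_in_paths, of a c] arrow_in_basis[of a] arrow_path_in_paths[of a]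
  by (simp add: reduced_ad_def reduce_def ad_def arrow_path_def psrc_def ptgt_def)

text \<open>The sum of the vertices is the unit of kQ, hence central.\<close>

lemma pmul_unit_delta:
  assumes p: "p \<in> P"
  shows "pm unit_kQ (delta p) = (delta p :: _ \<Rightarrow> 'k::field)" "pm (delta p) unit_kQ = (delta p :: _ \<Rightarrow> 'k)"
proof -
  have src: "(fst p, []) \<in> vertex_set" "(ptgt t p, []) \<in> vertex_set"
    using p ptgt_in_Q0 by (auto simp: vertex_set_def path_iff_chain')
  have "(if composable x p \<and> pcat x p = q then unit_kQ x else 0)
      = (if x = (fst p, []) then delta p q else (0 :: 'k))" for x q
    using src by (cases x) (auto simp: unit_kQ_def vertex_set_def delta_def pcat_def ptgt_def psrc_def)
  then show "pm unit_kQ (delta p) = (delta p :: _ \<Rightarrow> 'k)"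
    using src vertex_set_subset_paths by (auto simp: fun_eq_iff pmul_delta_right[OF p] finite_paths)
  have "(if composable p x \<and> pcat p x = q then unit_kQ x else 0)
      = (if x = (ptgt t p, []) then delta p q else (0 :: 'k))" for x q
    using src by (cases x) (auto simp: unit_kQ_def vertex_set_def delta_def pcat_def ptgt_def psrc_def)
  then show "pm (delta p) unit_kQ = (delta p :: _ \<Rightarrow> 'k)"
    using src vertex_set_subset_paths by (auto simp: fun_eq_iff pmul_delta_left[OF p] finite_paths)
qed

lemma reduced_ad_unit: "reduced_ad (unit_kQ :: _ \<Rightarrow> 'k::field) = 0"
  by (auto simp: fun_eq_iff reduced_ad_def reduce_def ad_def pmul_unit_delta)

text \<open>Connectedness of Q forces c to be constant on the vertices.\<close>

lemma reduced_ad_kernel: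
  "supp_funs vertex_set \<inter> {c. reduced_ad c = 0} = range (\<lambda>k. fscale k (unit_kQ :: _ \<Rightarrow> 'k::field))"
proof (intro subset_antisym subsetI)
  fix c :: "_ \<Rightarrow> 'k" assume "c \<in> range (\<lambda>k. fscale k unit_kQ)"
  then obtain k where k: "c = fscale k unit_kQ" by blast
  have "reduced_ad c = mat_scale k (reduced_ad unit_kQ)"
    unfolding k by (simp add: reduced_ad_def ad_scale reduce_def mat_scale_def fun_eq_iff)
  then have "reduced_ad c = 0" by (simp add: reduced_ad_unit mat_scale_def fun_eq_iff)
  moreover have "c \<in> supp_funs vertex_set" using k by (simp add: supp_funs_def fscale_def unit_kQ_def)
  ultimately show "c \<in> supp_funs vertex_set \<inter> {c. reduced_ad c = 0}" by blast
next
  fix c :: "_ \<Rightarrow> 'k" assume c: "c \<in> supp_funs vertex_set \<inter> {c. reduced_ad c = 0}"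
  obtain v0 where v0: "v0 \<in> Q0" using connected_Q by (auto simp: connected_quiver_def)
  have "c (v, []) = c (v0, [])" if v: "v \<in> Q0" for v
  proof -
    have "(v0, v) \<in> ({(s a, t a) | a. a \<in> Q1} \<union> {(t a, s a) | a. a \<in> Q1})\<^sup>*"
      using connected_Q v0 v by (auto simp: connected_quiver_def)
    then show ?thesis
    proof (induction rule: rtrancl_induct)
      case (step y z)
      moreover have "c (s a, []) = c (t a, [])" if "a \<in> Q1" for a
        using c reduced_ad_arrow[OF that, of c] by simp
      ultimately show ?case by auto
    qed simp
  qed
  then have "c = fscale (c (v0, [])) unit_kQ"
    using c by (auto simp: fun_eq_iff fscale_def unit_kQ_def supp_funs_def vertex_set_def)
  then show "c \<in> range (\<lambda>k. fscale k unit_kQ)" by blast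
qed

lemma unit_kQ_neq_0: "(unit_kQ :: _ \<Rightarrow> 'k::field) \<noteq> 0"
proof -
  obtain v0 where "v0 \<in> Q0" using connected_Q by (auto simp: connected_quiver_def)
  then have "(unit_kQ :: _ \<Rightarrow> 'k) (v0, []) = 1" by (simp add: unit_kQ_def vertex_set_def)
  then show ?thesis by (metis one_neq_zero zero_fun_apply)
qed

lemma finite_non_effective: "finite NE"
proof -
  have "NE \<subseteq> Q1 \<times> P" using basis_in_paths by (auto simp: non_effective_def parallel_pairs_def)
  moreover have "finite (Q1 \<times> P)" using finite_Q finite_paths by (simp add: finite_quiver_def)
  ultimately show ?thesis by (rule finite_subset)
qed

lemma arrow_values_normalized_der:
  assumes M: "normalized_der (M :: _ \<Rightarrow> _ \<Rightarrow> 'k::field)"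
  shows "arrow_values M \<in> supp_funs NE"
  unfolding supp_funs_def mem_Collect_eq
proof (intro allI impI)
  fix x assume x: "x \<notin> NE"
  obtain a e where ae: "x = (a, e)" by (cases x)
  show "arrow_values M x = 0"
  proof (cases "a \<in> Q1 \<and> M (arrow_path a) e \<noteq> 0")
    case True
    then have "(a, e) \<in> parallel_pairs Q0 Q1 s t B"
      using normalized_der_parallel[OF M, of a e] by (simp add: parallel_pairs_def)
    moreover from this have "effective Q0 Q1 s t Z a e" using x ae by (simp add: non_effective_def)
    ultimately show ?thesis using normalized_der_effective[OF M] ae by (simp add: arrow_values_def)
  next
    case False
    moreover have "M (arrow_path a) e = 0" if "a \<notin> Q1"
      using that normalized_der_row[OF M, of "arrow_path a"] by (simp add: arrow_path_def path_iff_chain)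
    ultimately show ?thesis using ae by (auto simp: arrow_values_def)
  qed
qed

lemma arrow_values_replacement_der:
  assumes "(a, e) \<in> NE"
  shows "arrow_values (replacement_der a e) = (unit_fun (a, e) :: _ \<Rightarrow> 'k::field)"
proof
  fix x :: "'a \<times> ('v,'a) path"
  show "arrow_values (replacement_der a e) x = (unit_fun (a, e) x :: 'k)"
    using replacement_der_arrow[OF assms, of "fst x" "snd x"]
    by (cases x) (simp add: arrow_values_def unit_fun_def)
qed

lemma subspace_normalized_ders: "mat_vs.subspace {M :: _ \<Rightarrow> _ \<Rightarrow> 'k::field. normalized_der M}"
  unfolding reduced_der_vertex_kernel[symmetric]
  by (intro mat_vs.subspace_inter mat_mat.linear_subspace_image mat_mat.linear_subspace_kernel
      linear_reduce linear_vertex_rows subspace_der_lifts)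

lemma arrow_values_normalized_ders:
  "arrow_values ` {M :: _ \<Rightarrow> _ \<Rightarrow> 'k::field. normalized_der M} = supp_funs NE"
proof (intro subset_antisym)
  let ?D = "{M :: _ \<Rightarrow> _ \<Rightarrow> 'k. normalized_der M}"
  show "arrow_values ` ?D \<subseteq> supp_funs NE" using arrow_values_normalized_der by blast
  have "unit_fun x \<in> arrow_values ` ?D" if "x \<in> NE" for x
  proof -
    obtain a e where x: "x = (a, e)" by (cases x)
    then have "normalized_der (replacement_der a e :: _ \<Rightarrow> _ \<Rightarrow> 'k)"
      using replacement_der_normalized that by blast
    then show ?thesis using arrow_values_replacement_der that x by (metis image_eqI mem_Collect_eq)
  qed
  then have "fun_vs.span (unit_fun ` NE) \<subseteq> arrow_values ` ?D"
    by (intro fun_vs.span_minimal mat_fun.linear_subspace_image[OF linear_arrow_values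
          subspace_normalized_ders]) blast
  then show "supp_funs NE \<subseteq> arrow_values ` ?D"
    using supp_funs_subset_span[OF finite_non_effective] by blast
qed

lemma arrow_values_normalized_ders_kernel:
  "{M :: _ \<Rightarrow> _ \<Rightarrow> 'k::field. normalized_der M} \<inter> {M. arrow_values M = 0} = {0}"
proof (intro subset_antisym subsetI)
  fix M :: "_ \<Rightarrow> _ \<Rightarrow> 'k" assume M: "M \<in> {M. normalized_der M} \<inter> {M. arrow_values M = 0}"
  have "arrow_values M (a, e) = 0" for a e using M by simp
  then have "M (arrow_path a) e = 0" for a e by (simp add: arrow_values_def)
  then have "M = (\<lambda>_ _. 0)" using M normalized_der_eq_0 by blast
  then show "M \<in> {0}" by (simp add: zero_fun_def)
next
  fix M :: "('v,'a) path \<Rightarrow> ('v,'a) path \<Rightarrow> 'k" assume "M \<in> {0}"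
  then have M0: "M = 0" by simp
  have "arrow_values (0 :: _ \<Rightarrow> _ \<Rightarrow> 'k) = 0" by (simp add: arrow_values_def fun_eq_iff)
  then show "M \<in> {M. normalized_der M} \<inter> {M. arrow_values M = 0}"
    using M0 mat_vs.subspace_0[OF subspace_normalized_ders] by simp
qed

text \<open>A normalized derivation is determined by its values on the arrows, which are exactly
  the functions supported on the non-effective pairs.\<close>

lemma dim_normalized_ders: "mat_vs.dim {M :: _ \<Rightarrow> _ \<Rightarrow> 'k::field. normalized_der M} = card NE"
proof -
  let ?D = "{M :: _ \<Rightarrow> _ \<Rightarrow> 'k. normalized_der M}"
  have "?D \<subseteq> mat_vs.span (mat_unit ` (P \<times> P))"
    using normalized_der_endo endo_mats_subset_span by blast
  then have "mat_vs.dim ?D = mat_vs.dim (?D \<inter> {M. arrow_values M = 0}) + fun_vs.dim (arrow_values ` ?D)"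
    using finite_paths by (intro mat_fun.rank_nullity[OF linear_arrow_values subspace_normalized_ders]) auto
  then show ?thesis
    unfolding arrow_values_normalized_ders_kernel arrow_values_normalized_ders
    using mat_vs.dim_zero dim_supp_funs[OF finite_non_effective, where 'k = 'k] by simp
qed

lemma dim_reduced_ad_image:
  "mat_vs.dim (reduced_ad ` supp_funs vertex_set :: (_ \<Rightarrow> _ \<Rightarrow> 'k::field) set) + 1 = card Q0"
proof -
  let ?W = "supp_funs vertex_set :: (_ \<Rightarrow> 'k) set"
  have "?W \<inter> {c. reduced_ad c = 0} = fun_vs.span {unit_kQ}"
    unfolding fun_vs.span_singleton by (rule reduced_ad_kernel)
  then have "fun_vs.dim (?W \<inter> {c. reduced_ad c = 0}) = fun_vs.dim {unit_kQ :: _ \<Rightarrow> 'k}"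
    by simp
  also have "\<dots> = 1"
    using fun_vs.dim_eq_card_independent[of "{unit_kQ :: _ \<Rightarrow> 'k}"] unit_kQ_neq_0 by simp
  finally have "fun_vs.dim (?W \<inter> {c. reduced_ad c = 0}) = 1" .
  moreover have "fun_vs.dim ?W = fun_vs.dim (?W \<inter> {c. reduced_ad c = 0}) + mat_vs.dim (reduced_ad ` ?W)"
    by (rule fun_mat.rank_nullity[OF linear_reduced_ad subspace_supp_funs
          finite_imageI[OF finite_vertex_set] supp_funs_subset_span[OF finite_vertex_set]])
  ultimately show ?thesis
    using dim_supp_funs[OF finite_vertex_set, where 'k = 'k] card_vertex_set by simp
qed

lemma HH1_dim_eq: "HH1_dim Q0 Q1 s t Z TYPE('k::field) = 1 - int (card Q0) + int (card NE)"
proof -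
  let ?Der = "Der :: (_ \<Rightarrow> _ \<Rightarrow> 'k) set" and ?Inn = "Inn :: (_ \<Rightarrow> _ \<Rightarrow> 'k) set"
  let ?E = "mat_unit ` (P \<times> P) :: (_ \<Rightarrow> _ \<Rightarrow> 'k) set"
  let ?ker = "{M :: _ \<Rightarrow> _ \<Rightarrow> 'k. vertex_rows M = 0}"
  have fin: "finite ?E" using finite_paths by simp
  have span: "?Der \<subseteq> mat_vs.span ?E" "?Inn \<subseteq> mat_vs.span ?E"
    "reduce ` ?Der \<subseteq> mat_vs.span ?E" "reduce ` ?Inn \<subseteq> mat_vs.span ?E"
    using endo_mats_subset_span reduce_endo unfolding der_lifts_def inn_lifts_def by blast+
  have sub: "mat_vs.subspace (reduce ` ?Der)" "mat_vs.subspace (reduce ` ?Inn)"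
    by (intro mat_mat.linear_subspace_image linear_reduce subspace_der_lifts subspace_inn_lifts)+
  have "HH1_dim Q0 Q1 s t Z TYPE('k) = int (mat_vs.dim (reduce ` ?Der)) - int (mat_vs.dim (reduce ` ?Inn))"
    unfolding HH1_dim_def
    using mat_mat.dim_diff_eq_image_dim_diff[OF linear_reduce subspace_der_lifts subspace_inn_lifts
          fin span(1,2) der_lifts_kernel_eq] by simp
  also have "\<dots> = int (mat_vs.dim (reduce ` ?Der \<inter> ?ker)) - int (mat_vs.dim (reduce ` ?Inn \<inter> ?ker))"
    by (rule mat_mat.dim_diff_eq_kernel_dim_diff[OF linear_vertex_rows sub fin span(3,4)
        vertex_rows_reduced_lifts_eq])
  also have "\<dots> = int (card NE) - int (mat_vs.dim (reduced_ad ` supp_funs vertex_set :: (_ \<Rightarrow> _ \<Rightarrow> 'k) set))"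
    unfolding reduced_der_vertex_kernel reduced_inn_vertex_kernel dim_normalized_ders ..
  also have "\<dots> = 1 - int (card Q0) + int (card NE)"
    using dim_reduced_ad_image[where 'k = 'k] by linarith
  finally show ?thesis .
qed

end

theorem theorem5p1:
  fixes Q0 :: "'v set" and Q1 :: "'a set" and s t :: "'a \<Rightarrow> 'v"
    and Z :: "('v,'a) path set"
  assumes "finite_quiver Q0 Q1 s t"
    and "connected_quiver Q0 Q1 s t"
    and "acyclic_quiver Q0 Q1 s t"
    and "minimal_relations Q0 Q1 s t Z"
  shows "HH1_dim Q0 Q1 s t Z TYPE('k::field)
           = 1 - int (card Q0) + int (card (non_effective Q0 Q1 s t Z))"
proof -
  interpret monomial_quiver Q0 Q1 s t Z using assms by unfold_locales
  show ?thesis by (rule HH1_dim_eq)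
qed

end
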